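(* Let $\mathcal L$ and $\mathcal L'$ be cabled linkages in $\mathbb R^n$ which are (strongly) functional for $f\colon(\mathbb R^n)^k\to(\mathbb R^n)^m$ and $g\colon(\mathbb R^n)^m\to(\mathbb R^n)^\ell$, with restricted domains $U$ and $U'$ respectively, and suppose $U\cap f^{-1}(U')\ne\emptyset$. Form $\mathcal L''$ by taking the disjoint union of $\mathcal L$ and $\mathcal L'$ and identifying the $i$-th output vertex of $\mathcal L$ with the $i$-th input vertex of $\mathcal L'$ for each $i=1,\dots,m$. Then $\mathcal L''$ is a (strongly) functional linkage for $g\circ f$ with restricted domain $U\cap f^{-1}(U')$, with input vertices those of $\mathcal L$ and output vertices those of $\mathcal L'$.
   Context: A cabled linkage in $\mathbb R^n$ is $\mathcal L=(L,\ell,V,\mu,F)$: $L$ a finite one-dimensional simplicial complex (vertex set $\mathcal V(L)$, edge set $\mathcal E(L)$), $\ell\colon\mathcal E(L)\to(0,\infty)$, $V\subset\mathcal V(L)$ fixed vertices, $\mu\colon V\to\mathbb R^n$, $F\subset\mathcal E(L)$ flexible edges. $\mathcal C(\mathcal L)=\{\varphi\colon\mathcal V(L)\to\mathbb R^n\mid\varphi(v)=\mu(v)\ (v\in V),\ |\varphi(v)-\varphi(w)|\le\ell(vw)\ (vw\in F),\ |\varphi(v)-\varphi(w)|=\ell(vw)\ (vw\in\mathcal E(L)\setminus F)\}$. $\mathcal L$ is quasifunctional for $f\colon(\mathbb R^n)^k\to(\mathbb R^n)^m$ if there are vertices $w_1,\dots,w_k$ (input) and $v_1,\dots,v_m$ (output),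 repetitions allowed, with input map $q(\varphi)=(\varphi(w_1),\dots,\varphi(w_k))$, output map $p(\varphi)=(\varphi(v_1),\dots,\varphi(v_m))$ and $p=f\circ q$; its domain is $q(\mathcal C(\mathcal L))$. It is functional with restricted domain $U\subset q(\mathcal C(\mathcal L))$ if there are a finite set $E$ and an analytic isomorphism $\sigma\colon U\times E\to q^{-1}(U)$ with $q(\sigma(u,c))=u$; strongly functional if $q\colon\mathcal C(\mathcal L)\to q(\mathcal C(\mathcal L))$ is an analytic isomorphism, and strongly functional with restricted domain $U$ if also $U\subset q(\mathcal C(\mathcal L))$. An analytic isomorphism is a homeomorphism $h$ with $h,h^{-1}$ restrictions of analytic maps. *)

theory Defs
  imports "HOL-Analysis.Analysis"
begin

text \<open>Points of a space (R^n)^I (I a finite index set, R^n modelled by a Euclidean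
  space type 'a) are represented by functions 'i => 'a vanishing outside I.\<close>

definition coord_space :: "'i set \<Rightarrow> ('i \<Rightarrow> 'a::real_normed_vector) set" where
  "coord_space I = {x. \<forall>i. i \<notin> I \<longrightarrow> x i = 0}"

definition multi_indices :: "'k set \<Rightarrow> ('k \<Rightarrow> nat) set" where
  "multi_indices K = {\<alpha>. \<forall>p. p \<notin> K \<longrightarrow> \<alpha> p = 0}"

definition monomial :: "'i set \<Rightarrow> ('i \<times> 'a \<Rightarrow> nat) \<Rightarrow> ('i \<Rightarrow> 'a::euclidean_space) \<Rightarrow> real" where
  "monomial I \<alpha> h = (\<Prod>p\<in>I \<times> Basis. (h (fst p) \<bullet> snd p) ^ \<alpha> p)"

definition real_analytic_at ::
  "'i set \<Rightarrow> 'j set \<Rightarrow> (('i \<Rightarrow> 'a::euclidean_space) \<Rightarrow> ('j \<Rightarrow> 'a)) \<Rightarrow> ('i \<Rightarrow> 'a) \<Rightarrow> bool" where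
  "real_analytic_at I J F x \<longleftrightarrow>
     (\<exists>r>0. \<exists>c :: ('i \<times> 'a \<Rightarrow> nat) \<Rightarrow> 'j \<Rightarrow> 'a.
        \<forall>h\<in>coord_space I. (\<forall>i\<in>I. norm (h i) < r) \<longrightarrow>
          (\<forall>j\<in>J. ((\<lambda>\<alpha>. monomial I \<alpha> h *\<^sub>R c \<alpha> j) has_sum F (\<lambda>i. x i + h i) j)
                     (multi_indices (I \<times> Basis))))"

definition open_in_coords :: "'i set \<Rightarrow> ('i \<Rightarrow> 'a::real_normed_vector) set \<Rightarrow> bool" where
  "open_in_coords I W \<longleftrightarrow> W \<subseteq> coord_space I \<and>
     (\<forall>x\<in>W. \<exists>r>0. \<forall>h\<in>coord_space I. (\<forall>i\<in>I. norm (h i) < r) \<longrightarrow> (\<lambda>i. x i + h i) \<in> W)"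

definition analytic_restriction ::
  "'i set \<Rightarrow> 'j set \<Rightarrow> (('i \<Rightarrow> 'a::euclidean_space) \<Rightarrow> ('j \<Rightarrow> 'a)) \<Rightarrow> ('i \<Rightarrow> 'a) set \<Rightarrow> bool" where
  "analytic_restriction I J f A \<longleftrightarrow>
     (\<exists>W F. open_in_coords I W \<and> A \<subseteq> W \<and> (\<forall>x\<in>W. real_analytic_at I J F x) \<and>
            (\<forall>x\<in>A. f x = F x))"

definition analytic_iso ::
  "'i set \<Rightarrow> 'j set \<Rightarrow> (('i \<Rightarrow> 'a::euclidean_space) \<Rightarrow> ('j \<Rightarrow> 'a)) \<Rightarrow> ('i \<Rightarrow> 'a) set \<Rightarrow> ('j \<Rightarrow> 'a) set \<Rightarrow> bool" where
  "analytic_iso I J h A B \<longleftrightarrow>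
     (\<exists>h'. homeomorphism A B h h' \<and> analytic_restriction I J h A \<and> analytic_restriction J I h' B)"

text \<open>Edges are given by an edge set with endpoint pairs (so that glued linkages, which
  may acquire parallel edges or loops, are still representable).\<close>
record ('v, 'e, 'a) linkage =
  verts :: "'v set"
  edges :: "'e set"
  ends  :: "'e \<Rightarrow> 'v \<times> 'v"
  len   :: "'e \<Rightarrow> real"
  fixed :: "'v set"
  pos   :: "'v \<Rightarrow> 'a"
  flex  :: "'e set"

definition cabled_linkage :: "('v, 'e, 'a) linkage \<Rightarrow> bool" where
  "cabled_linkage L \<longleftrightarrow>
     finite (verts L) \<and> finite (edges L) \<and>
     (\<forall>e\<in>edges L. fst (ends L e) \<in> verts L \<and> snd (ends L e) \<in> verts L \<and>
                   fst (ends L e) \<noteq> snd (ends L e) \<and> len L e > 0) \<and>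
     (\<forall>e\<in>edges L. \<forall>e'\<in>edges L.
        {fst (ends L e), snd (ends L e)} = {fst (ends L e'), snd (ends L e')} \<longrightarrow> e = e') \<and>
     fixed L \<subseteq> verts L \<and> flex L \<subseteq> edges L"

definition config_space :: "('v, 'e, 'a::real_normed_vector) linkage \<Rightarrow> ('v \<Rightarrow> 'a) set" where
  "config_space L = {\<phi>.
     (\<forall>v. v \<notin> verts L \<longrightarrow> \<phi> v = 0) \<and>
     (\<forall>v\<in>fixed L. \<phi> v = pos L v) \<and>
     (\<forall>e\<in>flex L. dist (\<phi> (fst (ends L e))) (\<phi> (snd (ends L e))) \<le> len L e) \<and>
     (\<forall>e\<in>edges L - flex L. dist (\<phi> (fst (ends L e))) (\<phi> (snd (ends L e))) = len L e)}"

text \<open>Input/output map for a list of vertices w_1..w_k: phi |-> (phi w_1, ..., phi w_k),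
  a point of (R^n)^k represented as a function on {..<k}.\<close>
definition tuple_map :: "'v list \<Rightarrow> ('v \<Rightarrow> 'a::zero) \<Rightarrow> nat \<Rightarrow> 'a" where
  "tuple_map ws \<phi> = (\<lambda>i. if i < length ws then \<phi> (ws ! i) else 0)"

definition quasifunctional ::
  "('v, 'e, 'a::real_normed_vector) linkage \<Rightarrow> 'v list \<Rightarrow> 'v list \<Rightarrow> ((nat \<Rightarrow> 'a) \<Rightarrow> (nat \<Rightarrow> 'a)) \<Rightarrow> bool" where
  "quasifunctional L ws vs f \<longleftrightarrow>
     set ws \<subseteq> verts L \<and> set vs \<subseteq> verts L \<and>
     (\<forall>\<phi>\<in>config_space L. tuple_map vs \<phi> = f (tuple_map ws \<phi>))"

text \<open>The finite set E carries the discrete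
  topology; an analytic map on U x E is one analytic in u for each fixed c, and an
  analytic map into the discrete set E is a locally constant (= continuous) one, so
  the analytic isomorphism sigma : U x E -> q^-1(U) is: a homeomorphism whose
  components sigma(-,c) and whose inverse's U-component are restrictions of analytic maps.\<close>
definition functional_on ::
  "('v, 'e, 'a::euclidean_space) linkage \<Rightarrow> 'v list \<Rightarrow> 'v list \<Rightarrow> ((nat \<Rightarrow> 'a) \<Rightarrow> (nat \<Rightarrow> 'a))
     \<Rightarrow> (nat \<Rightarrow> 'a) set \<Rightarrow> bool" where
  "functional_on L ws vs f U \<longleftrightarrow>
     quasifunctional L ws vs f \<and> U \<subseteq> tuple_map ws ` config_space L \<and>
     (\<exists>E :: nat set. \<exists>\<sigma> :: (nat \<Rightarrow> 'a) \<Rightarrow> nat \<Rightarrow> ('v \<Rightarrow> 'a). \<exists>\<sigma>'.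
        finite E \<and>
        homeomorphism (U \<times> E) {\<phi> \<in> config_space L. tuple_map ws \<phi> \<in> U} (\<lambda>(u, c). \<sigma> u c) \<sigma>' \<and>
        (\<forall>u\<in>U. \<forall>c\<in>E. tuple_map ws (\<sigma> u c) = u) \<and>
        (\<forall>c\<in>E. analytic_restriction {..<length ws} (verts L) (\<lambda>u. \<sigma> u c) U) \<and>
        analytic_restriction (verts L) {..<length ws} (fst \<circ> \<sigma>')
          {\<phi> \<in> config_space L. tuple_map ws \<phi> \<in> U})"

definition strongly_functional_on ::
  "('v, 'e, 'a::euclidean_space) linkage \<Rightarrow> 'v list \<Rightarrow> 'v list \<Rightarrow> ((nat \<Rightarrow> 'a) \<Rightarrow> (nat \<Rightarrow> 'a))
     \<Rightarrow> (nat \<Rightarrow> 'a) set \<Rightarrow> bool" where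
  "strongly_functional_on L ws vs f U \<longleftrightarrow>
     quasifunctional L ws vs f \<and> U \<subseteq> tuple_map ws ` config_space L \<and>
     analytic_iso (verts L) {..<length ws} (tuple_map ws) (config_space L)
       (tuple_map ws ` config_space L)"

definition glue_rel :: "('v, 'e, 'a) linkage \<Rightarrow> ('w, 'f, 'a) linkage \<Rightarrow> 'v list \<Rightarrow> 'w list
    \<Rightarrow> (('v + 'w) \<times> ('v + 'w)) set" where
  "glue_rel L L' vs ws' =
     (let S = {(Inl (vs ! i), Inr (ws' ! i)) | i. i < length vs}
      in Id_on (verts L <+> verts L') \<union> (S \<union> S\<inverse>)\<^sup>+)"

definition glue :: "('v, 'e, 'a) linkage \<Rightarrow> ('w, 'f, 'a) linkage \<Rightarrow> 'v list \<Rightarrow> 'w list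
    \<Rightarrow> (('v + 'w) set, 'e + 'f, 'a) linkage" where
  "glue L L' vs ws' =
     (let R = glue_rel L L' vs ws'; cls = (\<lambda>x. R `` {x}); Fx = fixed L <+> fixed L'
      in \<lparr> verts = (verts L <+> verts L') // R,
           edges = edges L <+> edges L',
           ends = case_sum (\<lambda>e. (cls (Inl (fst (ends L e))), cls (Inl (snd (ends L e)))))
                           (\<lambda>e. (cls (Inr (fst (ends L' e))), cls (Inr (snd (ends L' e))))),
           len = case_sum (len L) (len L'),
           fixed = {X \<in> (verts L <+> verts L') // R. X \<inter> Fx \<noteq> {}},
           pos = (\<lambda>X. case_sum (pos L) (pos L') (SOME x. x \<in> X \<inter> Fx)),
           flex = flex L <+> flex L' \<rparr>)"

definition glue_inputs :: "('v, 'e, 'a) linkage \<Rightarrow> ('w, 'f, 'a) linkage \<Rightarrow> 'v list \<Rightarrow> 'w list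
    \<Rightarrow> 'v list \<Rightarrow> ('v + 'w) set list" where
  "glue_inputs L L' vs ws' ws = map (\<lambda>v. glue_rel L L' vs ws' `` {Inl v}) ws"

definition glue_outputs :: "('v, 'e, 'a) linkage \<Rightarrow> ('w, 'f, 'a) linkage \<Rightarrow> 'v list \<Rightarrow> 'w list
    \<Rightarrow> 'w list \<Rightarrow> ('v + 'w) set list" where
  "glue_outputs L L' vs ws' vs' = map (\<lambda>w. glue_rel L L' vs ws' `` {Inr w}) vs'"

end

theory Submission
  imports Defs
begin

(* A configuration of the glued linkage is the same as a pair of configurations of L and L'
   that agree on the identified vertices, i.e. a configuration of L with input u together with
   a configuration of L' with input f u.  If sigma(u, c) and tau(v, c') parametrise the
   configurations of L and L' over their inputs, the glued linkage is thus parametrised by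
   (u, (c, c')) |-> glue(sigma(u, c), tau(f u, c')) for u in U with f u in U', with inverse read
   off from the inputs and the labels of the two halves; in the strongly functional case there
   are no labels.  This map is analytic because f u is the output of sigma(u, c) and composites
   of real-analytic maps are real analytic.  The latter is proved by substituting convergent
   power series into a power series and regrouping the absolutely convergent multiple sum. *)

section \<open>Unconditional sums\<close>

lemma has_sum_diff:
  fixes f g :: "'a \<Rightarrow> 'b::topological_ab_group_add"
  assumes "(f has_sum a) A" "(g has_sum b) A"
  shows "((\<lambda>x. f x - g x) has_sum a - b) A"
  using has_sum_add[OF assms(1) has_sum_uminus[where f=g and a="- b", THEN iffD2]] assms(2) by simp

lemma has_sum_sum_finite_family:
  fixes f :: "'k \<Rightarrow> 'a \<Rightarrow> 'b::topological_comm_monoid_add"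
  shows "finite S \<Longrightarrow> (\<And>k. k \<in> S \<Longrightarrow> (f k has_sum v k) A) \<Longrightarrow>
           ((\<lambda>x. \<Sum>k\<in>S. f k x) has_sum (\<Sum>k\<in>S. v k)) A"
  by (induction S rule: finite_induct) (auto intro: has_sum_add)

lemma abs_has_sum_le_infsum_abs:
  fixes f :: "'a \<Rightarrow> real"
  assumes "(f has_sum v) A" "(\<lambda>x. \<bar>f x\<bar>) summable_on A"
  shows "\<bar>v\<bar> \<le> infsum (\<lambda>x. \<bar>f x\<bar>) A"
  using norm_infsum_bound[of f A] assms by (simp add: infsumI)

lemma has_sum_prod_PiE_nonneg:
  fixes f :: "'a \<Rightarrow> 'b \<Rightarrow> real"
  assumes "finite A"
    and "\<And>x. x \<in> A \<Longrightarrow> (f x has_sum S x) (B x)"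
    and "\<And>x y. x \<in> A \<Longrightarrow> y \<in> B x \<Longrightarrow> f x y \<ge> 0"
  shows "((\<lambda>g. \<Prod>x\<in>A. f x (g x)) has_sum (\<Prod>x\<in>A. S x)) (PiE A B)"
  using assms
proof (induction A rule: finite_induct)
  case empty
  then show ?case by (auto simp: PiE_empty_domain intro: has_sum_finiteI)
next
  case (insert x A)
  have pi: "PiE (insert x A) B = (\<lambda>(g, y). g(x := y)) ` (PiE A B \<times> B x)"
    unfolding PiE_insert_eq
    by (subst swap_product [symmetric]) (simp add: image_image case_prod_unfold)
  have inj: "inj_on (\<lambda>(g, y). g(x := y)) (PiE A B \<times> B x)"
    using \<open>x \<notin> A\<close> by (rule inj_combinator')
  have IH: "((\<lambda>g. \<Prod>x\<in>A. f x (g x)) has_sum (\<Prod>x\<in>A. S x)) (PiE A B)"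
    using insert by auto
  have fx: "(f x has_sum S x) (B x)" using insert by auto
  have split: "(\<lambda>g. \<Prod>x\<in>insert x A. f x (g x)) \<circ> (\<lambda>(g, y). g(x := y)) =
               (\<lambda>(p, y). (\<Prod>x'\<in>A. f x' (p x')) * f x y)"
  proof -
    have "(\<Prod>z\<in>A. f z ((g(x := y)) z)) = (\<Prod>z\<in>A. f z (g z))" for g y
      using insert.hyps by (intro prod.cong) auto
    then show ?thesis using insert.hyps by (auto simp: fun_eq_iff mult.commute)
  qed
  have nonneg: "0 \<le> (\<Prod>x'\<in>A. f x' (p x'))" if "p \<in> PiE A B" for p
    using that insert.prems(2) by (intro prod_nonneg) (auto simp: PiE_def Pi_def)
  have inner: "((\<lambda>y. (\<Prod>x'\<in>A. f x' (p x')) * f x y) has_sum (\<Prod>x'\<in>A. f x' (p x')) * S x) (B x)"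
    for p using has_sum_cmult_right[OF fx] by blast
  have outer: "((\<lambda>p. (\<Prod>x'\<in>A. f x' (p x')) * S x) has_sum (\<Prod>x\<in>A. S x) * S x) (PiE A B)"
    using has_sum_cmult_left[OF IH] by blast
  have "(\<lambda>(p, y). (\<Prod>x'\<in>A. f x' (p x')) * f x y) summable_on (PiE A B \<times> B x)"
    by (rule summable_on_SigmaI[OF _ has_sum_imp_summable[OF outer]])
       (use inner nonneg insert.prems(2) in \<open>auto intro!: mult_nonneg_nonneg\<close>)
  then have "((\<lambda>(p, y). (\<Prod>x'\<in>A. f x' (p x')) * f x y) has_sum (\<Prod>x\<in>A. S x) * S x) (PiE A B \<times> B x)"
    using inner by (intro has_sum_SigmaI[OF _ outer]) simp
  then have "((\<lambda>g. \<Prod>x\<in>insert x A. f x (g x)) has_sum (\<Prod>x\<in>A. S x) * S x) (PiE (insert x A) B)"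
    unfolding pi by (subst has_sum_reindex[OF inj]) (simp add: split)
  then show ?case using insert.hyps by (simp add: mult.commute)
qed

lemma has_sum_prod_PiE:
  fixes f :: "'a \<Rightarrow> 'b \<Rightarrow> real"
  assumes "finite A"
    and "\<And>x. x \<in> A \<Longrightarrow> (f x has_sum S x) (B x)"
    and "\<And>x. x \<in> A \<Longrightarrow> (\<lambda>y. \<bar>f x y\<bar>) summable_on B x"
  shows "((\<lambda>g. \<Prod>x\<in>A. f x (g x)) has_sum (\<Prod>x\<in>A. S x)) (PiE A B)"
    and "((\<lambda>g. \<Prod>x\<in>A. \<bar>f x (g x)\<bar>) has_sum (\<Prod>x\<in>A. infsum (\<lambda>y. \<bar>f x y\<bar>) (B x))) (PiE A B)"
proof -
  show abs: "((\<lambda>g. \<Prod>x\<in>A. \<bar>f x (g x)\<bar>) has_sum (\<Prod>x\<in>A. infsum (\<lambda>y. \<bar>f x y\<bar>) (B x))) (PiE A B)"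
    using assms(1,3) by (intro has_sum_prod_PiE_nonneg) auto
  have "(\<lambda>g. norm (\<Prod>x\<in>A. f x (g x))) summable_on (PiE A B)"
    using has_sum_imp_summable[OF abs] by (simp add: abs_prod)
  then have "(\<lambda>g. \<Prod>x\<in>A. f x (g x)) summable_on (PiE A B)"
    by (rule abs_summable_summable)
  moreover have "infsum (\<lambda>g. \<Prod>x\<in>A. f x (g x)) (PiE A B) = (\<Prod>x\<in>A. infsum (f x) (B x))"
    using assms(1,3) by (intro infsum_prod_PiE_abs) auto
  moreover have "(\<Prod>x\<in>A. infsum (f x) (B x)) = (\<Prod>x\<in>A. S x)"
    using assms(2) by (intro prod.cong refl infsumI)
  ultimately show "((\<lambda>g. \<Prod>x\<in>A. f x (g x)) has_sum (\<Prod>x\<in>A. S x)) (PiE A B)"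
    using has_sum_infsum by fastforce
qed

section \<open>Power series in finitely many real variables\<close>

definition real_monom :: "'p set \<Rightarrow> ('p \<Rightarrow> nat) \<Rightarrow> ('p \<Rightarrow> real) \<Rightarrow> real" where
  "real_monom P \<alpha> t = (\<Prod>p\<in>P. t p ^ \<alpha> p)"

definition multi_degree :: "'p set \<Rightarrow> ('p \<Rightarrow> nat) \<Rightarrow> nat" where
  "multi_degree P \<alpha> = (\<Sum>p\<in>P. \<alpha> p)"

definition has_power_series ::
  "'p set \<Rightarrow> real \<Rightarrow> (('p \<Rightarrow> nat) \<Rightarrow> real) \<Rightarrow> (('p \<Rightarrow> real) \<Rightarrow> real) \<Rightarrow> bool" where
  "has_power_series P r a F \<longleftrightarrow>
     (\<forall>t. (\<forall>p\<in>P. \<bar>t p\<bar> < r) \<longrightarrow>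
          ((\<lambda>\<alpha>. a \<alpha> * real_monom P \<alpha> t) has_sum F t) (multi_indices P))"

lemma has_power_seriesD:
  "has_power_series P r a F \<Longrightarrow> (\<And>p. p \<in> P \<Longrightarrow> \<bar>t p\<bar> < r) \<Longrightarrow>
     ((\<lambda>\<alpha>. a \<alpha> * real_monom P \<alpha> t) has_sum F t) (multi_indices P)"
  unfolding has_power_series_def by blast

lemma has_power_series_mono_radius:
  "has_power_series P r a F \<Longrightarrow> r' \<le> r \<Longrightarrow> has_power_series P r' a F"
  unfolding has_power_series_def by force

lemma real_monom_const: "real_monom P \<alpha> (\<lambda>_. c) = c ^ multi_degree P \<alpha>"
  by (simp add: real_monom_def multi_degree_def power_sum)

lemma real_monom_cong: "(\<And>p. p \<in> P \<Longrightarrow> t p = t' p) \<Longrightarrow> real_monom P \<alpha> t = real_monom P \<alpha> t'"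
  by (simp add: real_monom_def)

lemma real_monom_zero_exponent [simp]: "real_monom P (\<lambda>_. 0) t = 1"
  by (simp add: real_monom_def)

lemma real_monom_add_exponents:
  "finite K \<Longrightarrow> real_monom P (\<lambda>p. \<Sum>k\<in>K. \<sigma> k p) t = (\<Prod>k\<in>K. real_monom P (\<sigma> k) t)"
  unfolding real_monom_def by (simp add: power_sum prod.swap[of _ K])

lemma abs_real_monom_le:
  assumes "\<And>p. p \<in> P \<Longrightarrow> \<bar>t p\<bar> \<le> c"
  shows "\<bar>real_monom P \<alpha> t\<bar> \<le> c ^ multi_degree P \<alpha>"
proof -
  have "\<bar>real_monom P \<alpha> t\<bar> = (\<Prod>p\<in>P. \<bar>t p\<bar> ^ \<alpha> p)"
    by (simp add: real_monom_def abs_prod power_abs)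
  also have "\<dots> \<le> (\<Prod>p\<in>P. c ^ \<alpha> p)"
    by (intro prod_mono conjI power_mono assms) auto
  also have "\<dots> = c ^ multi_degree P \<alpha>"
    by (simp add: multi_degree_def power_sum)
  finally show ?thesis .
qed

lemma real_monom_nonneg: "(\<And>p. p \<in> P \<Longrightarrow> 0 \<le> t p) \<Longrightarrow> 0 \<le> real_monom P \<alpha> t"
  by (simp add: real_monom_def prod_nonneg)

lemma zero_in_multi_indices [simp]: "(\<lambda>_. 0) \<in> multi_indices P"
  by (simp add: multi_indices_def)

lemma multi_degree_pos:
  assumes "finite P" "\<alpha> \<in> multi_indices P" "\<alpha> \<noteq> (\<lambda>_. 0)"
  shows "multi_degree P \<alpha> > 0"
proof -
  obtain p where "\<alpha> p \<noteq> 0" using assms(3) by auto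
  moreover from this have "p \<in> P" using assms(2) by (auto simp: multi_indices_def)
  ultimately show ?thesis
    using assms(1) by (auto simp: multi_degree_def intro: sum_pos2)
qed

lemma real_monom_at_zero:
  "finite P \<Longrightarrow> \<alpha> \<in> multi_indices P \<Longrightarrow> \<alpha> \<noteq> (\<lambda>_. 0) \<Longrightarrow> real_monom P \<alpha> (\<lambda>_. 0) = 0"
  using multi_degree_pos by (fastforce simp: real_monom_const)

lemma prod_Sigma_lessThan_eq_real_monom:
  "finite Q \<Longrightarrow> (\<Prod>\<kappa>\<in>Sigma Q (\<lambda>q. {..<\<beta> q}). g (fst \<kappa>)) = real_monom Q \<beta> g"
  using prod.Sigma[of Q "\<lambda>q. {..<\<beta> q}" "\<lambda>q k. g q"] by (simp add: case_prod_unfold real_monom_def)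

lemma abs_real_monom_le_scaled:
  assumes "finite P" "\<alpha> \<in> multi_indices P" "\<alpha> \<noteq> (\<lambda>_. 0)" "0 \<le> \<epsilon>" "\<epsilon> \<le> 1" "0 \<le> \<tau>"
    and t: "\<And>p. p \<in> P \<Longrightarrow> \<bar>t p\<bar> \<le> \<epsilon> * \<tau>"
  shows "\<bar>real_monom P \<alpha> t\<bar> \<le> \<epsilon> * \<tau> ^ multi_degree P \<alpha>"
proof -
  obtain n where n: "multi_degree P \<alpha> = Suc n"
    using multi_degree_pos[OF assms(1-3)] gr0_implies_Suc by blast
  have "\<bar>real_monom P \<alpha> t\<bar> \<le> (\<epsilon> * \<tau>) ^ multi_degree P \<alpha>"
    using t by (rule abs_real_monom_le)
  also have "\<dots> = \<epsilon> * \<epsilon> ^ n * \<tau> ^ multi_degree P \<alpha>"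
    by (simp add: n power_mult_distrib)
  also have "\<dots> \<le> \<epsilon> * 1 * \<tau> ^ multi_degree P \<alpha>"
    using assms(4-6) by (intro mult_right_mono mult_left_mono power_le_one) auto
  finally show ?thesis by simp
qed

lemma has_power_series_abs_summable:
  assumes "has_power_series P r a F" "0 \<le> \<tau>" "\<tau> < r"
  shows "(\<lambda>\<alpha>. \<bar>a \<alpha>\<bar> * \<tau> ^ multi_degree P \<alpha>) summable_on multi_indices P"
proof -
  have "((\<lambda>\<alpha>. a \<alpha> * \<tau> ^ multi_degree P \<alpha>) has_sum F (\<lambda>_. \<tau>)) (multi_indices P)"
    using has_power_seriesD[OF assms(1), of "\<lambda>_. \<tau>"] assms(2,3) by (simp add: real_monom_const)
  then have "(\<lambda>\<alpha>. norm (a \<alpha> * \<tau> ^ multi_degree P \<alpha>)) summable_on multi_indices P"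
    by (subst summable_on_iff_abs_summable_on_real[symmetric]) (rule has_sum_imp_summable)
  then show ?thesis using assms(2) by (simp add: abs_mult)
qed

lemma has_power_series_abs_bound:
  assumes "finite P" "has_power_series P r a F" "a (\<lambda>_. 0) = 0"
    and "0 < \<tau>" "\<tau> < r" "0 \<le> \<epsilon>" "\<epsilon> \<le> 1"
    and t: "\<And>p. p \<in> P \<Longrightarrow> \<bar>t p\<bar> \<le> \<epsilon> * \<tau>"
  shows "(\<lambda>\<alpha>. \<bar>a \<alpha> * real_monom P \<alpha> t\<bar>) summable_on multi_indices P"
    and "infsum (\<lambda>\<alpha>. \<bar>a \<alpha> * real_monom P \<alpha> t\<bar>) (multi_indices P)
           \<le> \<epsilon> * infsum (\<lambda>\<alpha>. \<bar>a \<alpha>\<bar> * \<tau> ^ multi_degree P \<alpha>) (multi_indices P)"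
proof -
  let ?b = "\<lambda>\<alpha>. \<epsilon> * (\<bar>a \<alpha>\<bar> * \<tau> ^ multi_degree P \<alpha>)"
  have S: "(\<lambda>\<alpha>. \<bar>a \<alpha>\<bar> * \<tau> ^ multi_degree P \<alpha>) summable_on multi_indices P"
    using assms by (intro has_power_series_abs_summable) auto
  then have S': "?b summable_on multi_indices P" by (rule summable_on_cmult_right)
  have bound: "\<bar>a \<alpha> * real_monom P \<alpha> t\<bar> \<le> ?b \<alpha>" if "\<alpha> \<in> multi_indices P" for \<alpha>
  proof (cases "\<alpha> = (\<lambda>_. 0)")
    case True
    then show ?thesis using assms(3) by simp
  next
    case False
    have "\<bar>real_monom P \<alpha> t\<bar> \<le> \<epsilon> * \<tau> ^ multi_degree P \<alpha>"
      using assms(4-7) t by (intro abs_real_monom_le_scaled[OF assms(1) that False]) auto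
    then have "\<bar>a \<alpha>\<bar> * \<bar>real_monom P \<alpha> t\<bar> \<le> \<bar>a \<alpha>\<bar> * (\<epsilon> * \<tau> ^ multi_degree P \<alpha>)"
      by (intro mult_left_mono) auto
    then show ?thesis by (simp add: abs_mult mult_ac)
  qed
  show summable: "(\<lambda>\<alpha>. \<bar>a \<alpha> * real_monom P \<alpha> t\<bar>) summable_on multi_indices P"
    by (rule summable_on_comparison_test[OF S' bound]) auto
  have "infsum (\<lambda>\<alpha>. \<bar>a \<alpha> * real_monom P \<alpha> t\<bar>) (multi_indices P) \<le> infsum ?b (multi_indices P)"
    by (rule infsum_mono[OF summable S' bound])
  also have "\<dots> = \<epsilon> * infsum (\<lambda>\<alpha>. \<bar>a \<alpha>\<bar> * \<tau> ^ multi_degree P \<alpha>) (multi_indices P)"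
    by (rule infsum_cmult_right) (use S in auto)
  finally show "infsum (\<lambda>\<alpha>. \<bar>a \<alpha> * real_monom P \<alpha> t\<bar>) (multi_indices P)
           \<le> \<epsilon> * infsum (\<lambda>\<alpha>. \<bar>a \<alpha>\<bar> * \<tau> ^ multi_degree P \<alpha>) (multi_indices P)" .
qed

lemma has_power_series_drop_constant:
  assumes "finite P" "r > 0" "has_power_series P r a F"
  shows "has_power_series P r (\<lambda>\<alpha>. if \<alpha> = (\<lambda>_. 0) then 0 else a \<alpha>) (\<lambda>t. F t - F (\<lambda>_. 0))"
proof -
  let ?const = "\<lambda>t \<alpha>. if \<alpha> = (\<lambda>_. 0) then a \<alpha> * real_monom P \<alpha> t else 0"
  have const: "(?const t has_sum a (\<lambda>_. 0)) (multi_indices P)" for t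
    by (rule has_sum_finite_neutralI[where B="{\<lambda>_. 0}"]) auto
  have "((\<lambda>\<alpha>. a \<alpha> * real_monom P \<alpha> (\<lambda>_. 0)) has_sum F (\<lambda>_. 0)) (multi_indices P)"
    using assms(2) by (intro has_power_seriesD[OF assms(3)]) auto
  moreover have "a \<alpha> * real_monom P \<alpha> (\<lambda>_. 0) = ?const (\<lambda>_. 0) \<alpha>" if "\<alpha> \<in> multi_indices P" for \<alpha>
    using real_monom_at_zero[OF assms(1) that] by auto
  ultimately have "(?const (\<lambda>_. 0) has_sum F (\<lambda>_. 0)) (multi_indices P)"
    by (simp cong: has_sum_cong)
  then have a0: "a (\<lambda>_. 0) = F (\<lambda>_. 0)" using const has_sum_unique by blast
  show ?thesis
    unfolding has_power_series_def
  proof (intro allI impI)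
    fix t assume "\<forall>p\<in>P. \<bar>t p\<bar> < r"
    then have "((\<lambda>\<alpha>. a \<alpha> * real_monom P \<alpha> t - ?const t \<alpha>) has_sum F t - a (\<lambda>_. 0)) (multi_indices P)"
      by (intro has_sum_diff const has_power_seriesD[OF assms(3)]) auto
    moreover have "(\<lambda>\<alpha>. a \<alpha> * real_monom P \<alpha> t - ?const t \<alpha>) =
                   (\<lambda>\<alpha>. (if \<alpha> = (\<lambda>_. 0) then 0 else a \<alpha>) * real_monom P \<alpha> t)"
      by auto
    ultimately show "((\<lambda>\<alpha>. (if \<alpha> = (\<lambda>_. 0) then 0 else a \<alpha>) * real_monom P \<alpha> t)
                        has_sum F t - F (\<lambda>_. 0)) (multi_indices P)"
      by (simp add: a0)
  qed
qed

lemma has_sum_real_monom_PiE: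
  fixes c :: "'q \<Rightarrow> 'b \<Rightarrow> real" and \<beta> :: "'q \<Rightarrow> nat"
  assumes "finite Q"
    and c: "\<And>q. q \<in> Q \<Longrightarrow> (c q has_sum s q) B"
    and c_abs: "\<And>q. q \<in> Q \<Longrightarrow> (\<lambda>y. \<bar>c q y\<bar>) summable_on B"
  defines "K \<equiv> Sigma Q (\<lambda>q. {..<\<beta> q})"
  shows "((\<lambda>\<sigma>. \<Prod>\<kappa>\<in>K. c (fst \<kappa>) (\<sigma> \<kappa>)) has_sum real_monom Q \<beta> s) (PiE K (\<lambda>_. B))"
    and "((\<lambda>\<sigma>. \<Prod>\<kappa>\<in>K. \<bar>c (fst \<kappa>) (\<sigma> \<kappa>)\<bar>) has_sum real_monom Q \<beta> (\<lambda>q. infsum (\<lambda>y. \<bar>c q y\<bar>) B))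
           (PiE K (\<lambda>_. B))"
proof -
  have "finite K" using assms(1) by (simp add: K_def)
  have "((\<lambda>\<sigma>. \<Prod>\<kappa>\<in>K. c (fst \<kappa>) (\<sigma> \<kappa>)) has_sum (\<Prod>\<kappa>\<in>K. s (fst \<kappa>))) (PiE K (\<lambda>_. B))"
    by (rule has_sum_prod_PiE(1)[where S="\<lambda>\<kappa>. s (fst \<kappa>)"])
       (use \<open>finite K\<close> c c_abs in \<open>auto simp: K_def\<close>)
  moreover have "(\<Prod>\<kappa>\<in>K. s (fst \<kappa>)) = real_monom Q \<beta> s"
    unfolding K_def by (rule prod_Sigma_lessThan_eq_real_monom[OF assms(1)])
  ultimately show "((\<lambda>\<sigma>. \<Prod>\<kappa>\<in>K. c (fst \<kappa>) (\<sigma> \<kappa>)) has_sum real_monom Q \<beta> s) (PiE K (\<lambda>_. B))"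
    by simp
  have "((\<lambda>\<sigma>. \<Prod>\<kappa>\<in>K. \<bar>c (fst \<kappa>) (\<sigma> \<kappa>)\<bar>) has_sum (\<Prod>\<kappa>\<in>K. infsum (\<lambda>y. \<bar>c (fst \<kappa>) y\<bar>) B))
          (PiE K (\<lambda>_. B))"
    by (rule has_sum_prod_PiE(2)[where S="\<lambda>\<kappa>. s (fst \<kappa>)"])
       (use \<open>finite K\<close> c c_abs in \<open>auto simp: K_def\<close>)
  moreover have "(\<Prod>\<kappa>\<in>K. infsum (\<lambda>y. \<bar>c (fst \<kappa>) y\<bar>) B) = real_monom Q \<beta> (\<lambda>q. infsum (\<lambda>y. \<bar>c q y\<bar>) B)"
    unfolding K_def by (rule prod_Sigma_lessThan_eq_real_monom[OF assms(1)])
  ultimately show "((\<lambda>\<sigma>. \<Prod>\<kappa>\<in>K. \<bar>c (fst \<kappa>) (\<sigma> \<kappa>)\<bar>)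
                     has_sum real_monom Q \<beta> (\<lambda>q. infsum (\<lambda>y. \<bar>c q y\<bar>) B)) (PiE K (\<lambda>_. B))"
    by simp
qed

text \<open>Each power s q ^ \<beta> q of the outer series is expanded as a product of \<beta> q copies of the
  series for s q, so a term of the expansion is indexed by \<beta> and a choice \<sigma> of one index y
  for each of these factors.\<close>
lemma has_sum_power_series_substitution:
  fixes c :: "'q \<Rightarrow> 'b \<Rightarrow> real" and d :: "('q \<Rightarrow> nat) \<Rightarrow> real"
  assumes "finite Q" "\<rho> > 0"
    and c: "\<And>q. q \<in> Q \<Longrightarrow> (c q has_sum s q) B"
    and c_abs: "\<And>q. q \<in> Q \<Longrightarrow> (\<lambda>y. \<bar>c q y\<bar>) summable_on B"
    and c_small: "\<And>q. q \<in> Q \<Longrightarrow> infsum (\<lambda>y. \<bar>c q y\<bar>) B < \<rho>"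
    and H: "has_power_series Q \<rho> d H"
  defines "X \<equiv> \<lambda>(\<beta>, \<sigma>). d \<beta> * (\<Prod>\<kappa>\<in>Sigma Q (\<lambda>q. {..<\<beta> q}). c (fst \<kappa>) (\<sigma> \<kappa>))"
    and "\<Omega> \<equiv> Sigma (multi_indices Q) (\<lambda>\<beta>. PiE (Sigma Q (\<lambda>q. {..<\<beta> q})) (\<lambda>_. B))"
  shows "(X has_sum H s) \<Omega>"
proof -
  define K where "K \<beta> = Sigma Q (\<lambda>q. {..<\<beta> q})" for \<beta> :: "'q \<Rightarrow> nat"
  define M where "M = (\<lambda>q. infsum (\<lambda>y. \<bar>c q y\<bar>) B)"
  have M_nonneg: "0 \<le> M q" for q by (simp add: M_def infsum_nonneg)
  then have monom_M_nonneg: "0 \<le> real_monom Q \<beta> M" for \<beta> by (simp add: real_monom_nonneg)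
  define m where "m = Max (insert 0 (M ` Q))"
  have M_le_m: "M q \<le> m" if "q \<in> Q" for q using that assms(1) by (simp add: m_def)
  have m: "0 \<le> m" "m < \<rho>" using assms(1,2) c_small by (auto simp: m_def M_def)
  have s_small: "\<bar>s q\<bar> < \<rho>" if "q \<in> Q" for q
    using abs_has_sum_le_infsum_abs[OF c c_abs] c_small that by fastforce
  have inner: "((\<lambda>\<sigma>. X (\<beta>, \<sigma>)) has_sum d \<beta> * real_monom Q \<beta> s) (PiE (K \<beta>) (\<lambda>_. B))"
    and inner_abs: "((\<lambda>\<sigma>. norm (X (\<beta>, \<sigma>))) has_sum \<bar>d \<beta>\<bar> * real_monom Q \<beta> M) (PiE (K \<beta>) (\<lambda>_. B))"
    for \<beta>
  proof -
    note prods = has_sum_real_monom_PiE[where c=c and s=s and B=B and \<beta>=\<beta>, OF assms(1) c c_abs]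
    show "((\<lambda>\<sigma>. X (\<beta>, \<sigma>)) has_sum d \<beta> * real_monom Q \<beta> s) (PiE (K \<beta>) (\<lambda>_. B))"
      using has_sum_cmult_right[OF prods(1), where c="d \<beta>"] by (simp add: X_def K_def)
    show "((\<lambda>\<sigma>. norm (X (\<beta>, \<sigma>))) has_sum \<bar>d \<beta>\<bar> * real_monom Q \<beta> M) (PiE (K \<beta>) (\<lambda>_. B))"
      using has_sum_cmult_right[OF prods(2), where c="\<bar>d \<beta>\<bar>"]
      by (simp add: X_def K_def M_def abs_mult abs_prod)
  qed
  have outer_abs: "(\<lambda>\<beta>. \<bar>d \<beta>\<bar> * real_monom Q \<beta> M) summable_on multi_indices Q"
  proof (rule summable_on_comparison_test)
    show "(\<lambda>\<beta>. \<bar>d \<beta>\<bar> * m ^ multi_degree Q \<beta>) summable_on multi_indices Q"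
      by (rule has_power_series_abs_summable[OF H m])
    fix \<beta>
    have "\<bar>real_monom Q \<beta> M\<bar> \<le> m ^ multi_degree Q \<beta>"
      by (rule abs_real_monom_le) (use M_nonneg M_le_m in auto)
    then show "\<bar>d \<beta>\<bar> * real_monom Q \<beta> M \<le> \<bar>d \<beta>\<bar> * m ^ multi_degree Q \<beta>"
      by (intro mult_left_mono) auto
    show "0 \<le> \<bar>d \<beta>\<bar> * real_monom Q \<beta> M" using monom_M_nonneg by simp
  qed
  have X_abs: "(\<lambda>\<omega>. norm (X \<omega>)) summable_on \<Omega>"
    unfolding \<Omega>_def
  proof (rule Infinite_Sum.abs_summable_on_Sigma_iff[THEN iffD2], intro conjI ballI)
    show "(\<lambda>\<sigma>. norm (X (\<beta>, \<sigma>))) summable_on PiE (Sigma Q (\<lambda>q. {..<\<beta> q})) (\<lambda>_. B)" for \<beta>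
      using has_sum_imp_summable[OF inner_abs] by (simp add: K_def)
    have "infsum (\<lambda>\<sigma>. norm (X (\<beta>, \<sigma>))) (PiE (Sigma Q (\<lambda>q. {..<\<beta> q})) (\<lambda>_. B))
            = \<bar>d \<beta>\<bar> * real_monom Q \<beta> M" for \<beta>
      using inner_abs by (simp add: K_def infsumI)
    then show "(\<lambda>\<beta>. norm (infsum (\<lambda>\<sigma>. norm (X (\<beta>, \<sigma>))) (PiE (Sigma Q (\<lambda>q. {..<\<beta> q})) (\<lambda>_. B))))
                 summable_on multi_indices Q"
      using outer_abs monom_M_nonneg by (simp add: abs_mult)
  qed
  show ?thesis
    unfolding \<Omega>_def
    by (rule has_sum_SigmaI[OF _ has_power_seriesD[OF H s_small]])
       (use inner abs_summable_summable[OF X_abs] in \<open>auto simp: \<Omega>_def K_def\<close>)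
qed

lemma has_power_series_regroup:
  fixes Y :: "'w \<Rightarrow> real" and \<Gamma> :: "'w \<Rightarrow> 'p \<Rightarrow> nat"
  assumes "r > 0"
    and \<Gamma>: "\<And>\<omega>. \<omega> \<in> \<Omega> \<Longrightarrow> \<Gamma> \<omega> \<in> multi_indices P"
    and sums: "\<And>t. (\<And>p. p \<in> P \<Longrightarrow> \<bar>t p\<bar> < r) \<Longrightarrow>
                 ((\<lambda>\<omega>. Y \<omega> * real_monom P (\<Gamma> \<omega>) t) has_sum S t) \<Omega>"
  shows "has_power_series P r (\<lambda>\<gamma>. infsum Y {\<omega> \<in> \<Omega>. \<Gamma> \<omega> = \<gamma>}) S"
proof -
  define fiber where "fiber \<gamma> = {\<omega> \<in> \<Omega>. \<Gamma> \<omega> = \<gamma>}" for \<gamma>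
  have Y_summable: "Y summable_on fiber \<gamma>" for \<gamma>
  proof -
    let ?c = "(r / 2) ^ multi_degree P \<gamma>"
    have "(\<lambda>\<omega>. Y \<omega> * real_monom P (\<Gamma> \<omega>) (\<lambda>_. r / 2)) summable_on \<Omega>"
      using sums[of "\<lambda>_. r / 2"] assms(1) has_sum_imp_summable by force
    then have "(\<lambda>\<omega>. Y \<omega> * real_monom P (\<Gamma> \<omega>) (\<lambda>_. r / 2)) summable_on fiber \<gamma>"
      by (rule summable_on_subset_banach) (auto simp: fiber_def)
    then have "(\<lambda>\<omega>. Y \<omega> * ?c) summable_on fiber \<gamma>"
      by (rule summable_on_cong[THEN iffD1, rotated]) (auto simp: fiber_def real_monom_const)
    then show ?thesis
      using summable_on_cmult_left'[of ?c Y "fiber \<gamma>"] assms(1) by simp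
  qed
  show ?thesis
    unfolding has_power_series_def fiber_def[symmetric]
  proof (intro allI impI)
    fix t assume t: "\<forall>p\<in>P. \<bar>t p\<bar> < r"
    have "((\<lambda>\<omega>. Y \<omega> * real_monom P (\<Gamma> \<omega>) t) has_sum S t) \<Omega>"
      using t by (intro sums) auto
    also have "?this \<longleftrightarrow> ((\<lambda>(\<gamma>, \<omega>). Y \<omega> * real_monom P (\<Gamma> \<omega>) t) has_sum S t)
                           (Sigma (multi_indices P) fiber)"
      by (rule has_sum_reindex_bij_witness[where i=snd and j="\<lambda>\<omega>. (\<Gamma> \<omega>, \<omega>)"])
         (auto simp: fiber_def \<Gamma>)
    finally have sigma: "((\<lambda>(\<gamma>, \<omega>). Y \<omega> * real_monom P (\<Gamma> \<omega>) t) has_sum S t)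
                           (Sigma (multi_indices P) fiber)" .
    have "((\<lambda>\<omega>. Y \<omega> * real_monom P (\<Gamma> \<omega>) t) has_sum infsum Y (fiber \<gamma>) * real_monom P \<gamma> t)
            (fiber \<gamma>)" for \<gamma>
    proof -
      have "((\<lambda>\<omega>. Y \<omega> * real_monom P \<gamma> t) has_sum infsum Y (fiber \<gamma>) * real_monom P \<gamma> t) (fiber \<gamma>)"
        by (rule has_sum_cmult_left) (use Y_summable in simp)
      then show ?thesis
        by (rule has_sum_cong[THEN iffD1, rotated]) (auto simp: fiber_def)
    qed
    then show "((\<lambda>\<gamma>. infsum Y (fiber \<gamma>) * real_monom P \<gamma> t) has_sum S t) (multi_indices P)"
      using has_sum_SigmaD[OF sigma] by simp
  qed
qed

lemma small_common_factor:
  fixes A :: "'q \<Rightarrow> real"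
  assumes "finite Q" "\<rho> > 0"
  shows "\<exists>\<epsilon>>0. \<epsilon> \<le> 1 \<and> (\<forall>q\<in>Q. \<epsilon> * A q < \<rho>)"
proof (intro exI conjI ballI)
  define S where "S = 1 + (\<Sum>q\<in>Q. \<bar>A q\<bar>)"
  have S: "S \<ge> 1" by (simp add: S_def sum_nonneg)
  define \<epsilon> where "\<epsilon> = min 1 (\<rho> / S)"
  show "\<epsilon> > 0" "\<epsilon> \<le> 1" using assms S by (auto simp: \<epsilon>_def)
  fix q assume "q \<in> Q"
  then have "\<bar>A q\<bar> \<le> (\<Sum>q\<in>Q. \<bar>A q\<bar>)" using assms(1) by (intro member_le_sum) auto
  then have "\<bar>A q\<bar> / S < 1" using S by (simp add: S_def)
  have "\<epsilon> * A q \<le> \<epsilon> * \<bar>A q\<bar>"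
    using \<open>\<epsilon> > 0\<close> by (intro mult_left_mono) auto
  also have "\<dots> \<le> \<rho> / S * \<bar>A q\<bar>"
    by (intro mult_right_mono) (auto simp: \<epsilon>_def)
  also have "\<dots> = \<rho> * (\<bar>A q\<bar> / S)" by simp
  also have "\<dots> < \<rho>"
    using mult_strict_left_mono[OF \<open>\<bar>A q\<bar> / S < 1\<close> assms(2)] by simp
  finally show "\<epsilon> * A q < \<rho>" .
qed

lemma has_power_series_compose:
  fixes P :: "'p set" and Q :: "'q set" and a :: "'q \<Rightarrow> ('p \<Rightarrow> nat) \<Rightarrow> real"
  assumes "finite P" "finite Q" "r > 0" "\<rho> > 0"
    and inner: "\<And>q. q \<in> Q \<Longrightarrow> has_power_series P r (a q) (u q)"
    and no_constant: "\<And>q. q \<in> Q \<Longrightarrow> a q (\<lambda>_. 0) = 0"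
    and outer: "has_power_series Q \<rho> d H"
  shows "\<exists>r'>0. \<exists>e. has_power_series P r' e (\<lambda>t. H (\<lambda>q. u q t))"
proof -
  define \<tau> where "\<tau> = r / 2"
  have \<tau>: "0 < \<tau>" "\<tau> < r" using assms(3) by (auto simp: \<tau>_def)
  define A where "A q = infsum (\<lambda>\<alpha>. \<bar>a q \<alpha>\<bar> * \<tau> ^ multi_degree P \<alpha>) (multi_indices P)" for q
  \<comment> \<open>On the polydisc of radius \<epsilon> \<tau> the inner series converge absolutely to values below \<rho>.\<close>
  obtain \<epsilon> where \<epsilon>: "0 < \<epsilon>" "\<epsilon> \<le> 1" and \<epsilon>A: "\<And>q. q \<in> Q \<Longrightarrow> \<epsilon> * A q < \<rho>"
    using small_common_factor[OF assms(2,4), of A] by blast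
  define K where "K \<beta> = Sigma Q (\<lambda>q. {..<\<beta> q})" for \<beta> :: "'q \<Rightarrow> nat"
  define \<Omega> where "\<Omega> = Sigma (multi_indices Q) (\<lambda>\<beta>. PiE (K \<beta>) (\<lambda>_. multi_indices P))"
  define \<Gamma> where "\<Gamma> = (\<lambda>(\<beta>, \<sigma>). \<lambda>p::'p. \<Sum>\<kappa>\<in>K \<beta>. \<sigma> \<kappa> p :: nat)"
  define Y where "Y = (\<lambda>(\<beta>, \<sigma>). d \<beta> * (\<Prod>\<kappa>\<in>K \<beta>. a (fst \<kappa>) (\<sigma> \<kappa>)))"
  have finK: "finite (K \<beta>)" for \<beta> using assms(2) by (simp add: K_def)
  have "\<epsilon> * \<tau> \<le> \<tau>" using \<epsilon> \<tau> by (intro mult_left_le_one_le) auto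
  have "has_power_series P (\<epsilon> * \<tau>) (\<lambda>\<gamma>. infsum Y {\<omega> \<in> \<Omega>. \<Gamma> \<omega> = \<gamma>}) (\<lambda>t. H (\<lambda>q. u q t))"
  proof (rule has_power_series_regroup)
    show "\<epsilon> * \<tau> > 0" using \<epsilon> \<tau> by simp
    show "\<Gamma> \<omega> \<in> multi_indices P" if "\<omega> \<in> \<Omega>" for \<omega>
      using that by (auto simp: \<Omega>_def \<Gamma>_def multi_indices_def PiE_def Pi_def intro!: sum.neutral)
    fix t assume t: "\<And>p. p \<in> P \<Longrightarrow> \<bar>t p\<bar> < \<epsilon> * \<tau>"
    have t_le: "\<bar>t p\<bar> \<le> \<epsilon> * \<tau>" and t_less: "\<bar>t p\<bar> < r" if "p \<in> P" for p
      using t[OF that] \<open>\<epsilon> * \<tau> \<le> \<tau>\<close> \<tau> by linarith+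
    have abs_summable: "(\<lambda>\<alpha>. \<bar>a q \<alpha> * real_monom P \<alpha> t\<bar>) summable_on multi_indices P"
      and abs_small: "infsum (\<lambda>\<alpha>. \<bar>a q \<alpha> * real_monom P \<alpha> t\<bar>) (multi_indices P) < \<rho>"
      if "q \<in> Q" for q
    proof -
      note bound = has_power_series_abs_bound[where t=t, OF assms(1) inner[OF that] no_constant[OF that]
          \<tau> less_imp_le[OF \<epsilon>(1)] \<epsilon>(2) t_le]
      show "(\<lambda>\<alpha>. \<bar>a q \<alpha> * real_monom P \<alpha> t\<bar>) summable_on multi_indices P"
        by (rule bound(1))
      show "infsum (\<lambda>\<alpha>. \<bar>a q \<alpha> * real_monom P \<alpha> t\<bar>) (multi_indices P) < \<rho>"
        using bound(2) \<epsilon>A[OF that] unfolding A_def by linarith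
    qed
    have "((\<lambda>(\<beta>, \<sigma>). d \<beta> * (\<Prod>\<kappa>\<in>K \<beta>. a (fst \<kappa>) (\<sigma> \<kappa>) * real_monom P (\<sigma> \<kappa>) t))
            has_sum H (\<lambda>q. u q t)) \<Omega>"
      unfolding K_def \<Omega>_def
      by (rule has_sum_power_series_substitution[OF assms(2,4) _ abs_summable abs_small outer])
         (use inner t_less in \<open>auto intro: has_power_seriesD\<close>)
    moreover have "d \<beta> * (\<Prod>\<kappa>\<in>K \<beta>. a (fst \<kappa>) (\<sigma> \<kappa>) * real_monom P (\<sigma> \<kappa>) t)
                     = Y (\<beta>, \<sigma>) * real_monom P (\<Gamma> (\<beta>, \<sigma>)) t" for \<beta> \<sigma>
      by (simp add: Y_def \<Gamma>_def prod.distrib real_monom_add_exponents[OF finK])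
    ultimately show "((\<lambda>\<omega>. Y \<omega> * real_monom P (\<Gamma> \<omega>) t) has_sum H (\<lambda>q. u q t)) \<Omega>"
      by (simp add: case_prod_unfold)
  qed
  then show ?thesis using \<epsilon> \<tau> by (intro exI[of _ "\<epsilon> * \<tau>"]) auto
qed

section \<open>Real-analytic maps between coordinate spaces\<close>

definition from_coords :: "'i set \<Rightarrow> ('i \<times> 'a \<Rightarrow> real) \<Rightarrow> 'i \<Rightarrow> 'a::euclidean_space" where
  "from_coords I t = (\<lambda>i. if i \<in> I then (\<Sum>b\<in>Basis. t (i, b) *\<^sub>R b) else 0)"

definition coords :: "('i \<Rightarrow> 'a::euclidean_space) \<Rightarrow> 'i \<times> 'a \<Rightarrow> real" where
  "coords h = (\<lambda>p. h (fst p) \<bullet> snd p)"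

lemma from_coords_in_coord_space: "from_coords I t \<in> coord_space I"
  by (simp add: from_coords_def coord_space_def)

lemma coords_from_coords: "i \<in> I \<Longrightarrow> b \<in> Basis \<Longrightarrow> coords (from_coords I t) (i, b) = t (i, b)"
  by (simp add: coords_def from_coords_def inner_sum_left inner_Basis if_distrib cong: if_cong)

lemma from_coords_coords: "h \<in> coord_space I \<Longrightarrow> from_coords I (coords h) = h"
  by (auto simp: from_coords_def coords_def coord_space_def euclidean_representation fun_eq_iff)

lemma from_coords_zero [simp]: "from_coords I (\<lambda>_. 0) = (\<lambda>_. 0)"
  by (simp add: from_coords_def fun_eq_iff)

lemma monomial_eq_real_monom: "monomial I \<alpha> h = real_monom (I \<times> Basis) \<alpha> (coords h)"
  by (simp add: monomial_def real_monom_def coords_def)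

lemma monomial_from_coords: "monomial I \<alpha> (from_coords I t) = real_monom (I \<times> Basis) \<alpha> t"
  unfolding monomial_eq_real_monom by (rule real_monom_cong) (auto simp: coords_from_coords)

lemma add_from_coords_diff:
  assumes "y \<in> coord_space J" "z \<in> coord_space J"
  shows "(\<lambda>j. y j + from_coords J (\<lambda>q. z (fst q) \<bullet> snd q - y (fst q) \<bullet> snd q) j) = z"
proof -
  have "(\<lambda>q. z (fst q) \<bullet> snd q - y (fst q) \<bullet> snd q) = coords (\<lambda>j. z j - y j)"
    by (simp add: coords_def inner_diff_left)
  moreover have "(\<lambda>j. z j - y j) \<in> coord_space J" using assms by (simp add: coord_space_def)
  ultimately show ?thesis by (simp add: from_coords_coords)
qed

lemma abs_coords_le: "b \<in> Basis \<Longrightarrow> \<bar>coords h (i, b)\<bar> \<le> norm (h i)"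
  by (simp add: coords_def Basis_le_norm)

lemma norm_from_coords_less:
  assumes "\<forall>p\<in>I \<times> Basis. \<bar>t p\<bar> < c" "i \<in> I"
  shows "norm (from_coords I t i :: 'a::euclidean_space) < real DIM('a) * c"
proof -
  have "norm (from_coords I t i :: 'a) \<le> (\<Sum>b\<in>(Basis::'a set). norm (t (i, b) *\<^sub>R b))"
    using assms(2) unfolding from_coords_def by (simp only: if_True) (rule norm_sum)
  also have "\<dots> = (\<Sum>b\<in>(Basis::'a set). \<bar>t (i, b)\<bar>)" by simp
  also have "\<dots> < (\<Sum>b\<in>(Basis::'a set). c)"
    using assms by (intro sum_strict_mono) auto
  also have "\<dots> = real DIM('a) * c" by simp
  finally show ?thesis .
qed

definition analytic_scalar_at :: "'i set \<Rightarrow> (('i \<Rightarrow> 'a::euclidean_space) \<Rightarrow> real) \<Rightarrow> ('i \<Rightarrow> 'a) \<Rightarrow> bool" where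
  "analytic_scalar_at I \<phi> x \<longleftrightarrow>
     (\<exists>r>0. \<exists>a. has_power_series (I \<times> Basis) r a (\<lambda>t. \<phi> (\<lambda>i. x i + from_coords I t i)))"

lemma finite_common_radius:
  assumes "finite S" "\<And>s. s \<in> S \<Longrightarrow> R s > (0::real)"
  shows "\<exists>r>0. \<forall>s\<in>S. r \<le> R s"
proof (intro exI conjI ballI)
  show "Min (insert 1 (R ` S)) > 0" using assms by (subst Min_gr_iff) auto
  show "Min (insert 1 (R ` S)) \<le> R s" if "s \<in> S" for s using assms(1) that by simp
qed

lemma analytic_scalar_at_common_radius:
  fixes \<phi> :: "'q \<Rightarrow> ('i \<Rightarrow> 'a::euclidean_space) \<Rightarrow> real"
  assumes "finite Q" "\<And>q. q \<in> Q \<Longrightarrow> analytic_scalar_at I (\<phi> q) x"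
  shows "\<exists>r>0. \<exists>a. \<forall>q\<in>Q. has_power_series (I \<times> Basis) r (a q) (\<lambda>t. \<phi> q (\<lambda>i. x i + from_coords I t i))"
proof -
  have "\<forall>q\<in>Q. \<exists>ra. fst ra > 0 \<and>
          has_power_series (I \<times> Basis) (fst ra) (snd ra) (\<lambda>t. \<phi> q (\<lambda>i. x i + from_coords I t i))"
  proof
    fix q assume "q \<in> Q"
    then obtain r a where "r > 0"
      "has_power_series (I \<times> Basis) r a (\<lambda>t. \<phi> q (\<lambda>i. x i + from_coords I t i))"
      using assms(2) unfolding analytic_scalar_at_def by blast
    then show "\<exists>ra. fst ra > 0 \<and>
          has_power_series (I \<times> Basis) (fst ra) (snd ra) (\<lambda>t. \<phi> q (\<lambda>i. x i + from_coords I t i))"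
      by (intro exI[of _ "(r, a)"]) simp
  qed
  from bchoice[OF this] obtain ra where ra: "\<forall>q\<in>Q. fst (ra q) > 0 \<and>
          has_power_series (I \<times> Basis) (fst (ra q)) (snd (ra q)) (\<lambda>t. \<phi> q (\<lambda>i. x i + from_coords I t i))"
    by blast
  obtain r where r: "r > 0" "\<And>q. q \<in> Q \<Longrightarrow> r \<le> fst (ra q)"
    using finite_common_radius[OF assms(1), of "\<lambda>q. fst (ra q)"] ra by blast
  show ?thesis
  proof (intro exI[of _ r] conjI exI[of _ "\<lambda>q. snd (ra q)"] ballI)
    fix q assume "q \<in> Q"
    then show "has_power_series (I \<times> Basis) r (snd (ra q)) (\<lambda>t. \<phi> q (\<lambda>i. x i + from_coords I t i))"
      using ra r(2) by (auto intro: has_power_series_mono_radius[of _ "fst (ra q)"])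
  qed (rule r(1))
qed

lemma real_analytic_at_component:
  fixes F :: "('i \<Rightarrow> 'a::euclidean_space) \<Rightarrow> ('j \<Rightarrow> 'a)"
  assumes "real_analytic_at I J F x" "j \<in> J" "b \<in> Basis"
  shows "analytic_scalar_at I (\<lambda>z. F z j \<bullet> b) x"
proof -
  obtain r c where r: "r > 0" and c: "\<forall>h\<in>coord_space I. (\<forall>i\<in>I. norm (h i) < r) \<longrightarrow>
      (\<forall>j\<in>J. ((\<lambda>\<alpha>. monomial I \<alpha> h *\<^sub>R c \<alpha> j) has_sum F (\<lambda>i. x i + h i) j) (multi_indices (I \<times> Basis)))"
    using assms(1) unfolding real_analytic_at_def by blast
  show ?thesis
    unfolding analytic_scalar_at_def has_power_series_def
  proof (intro exI[of _ "r / real DIM('a)"] conjI exI[of _ "\<lambda>\<alpha>. c \<alpha> j \<bullet> b"] allI impI)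
    show "r / real DIM('a) > 0" using r by simp
    fix t :: "'i \<times> 'a \<Rightarrow> real" assume t: "\<forall>p\<in>I \<times> Basis. \<bar>t p\<bar> < r / real DIM('a)"
    have "norm (from_coords I t i :: 'a) < r" if "i \<in> I" for i
      using norm_from_coords_less[OF t that] by simp
    then have "((\<lambda>\<alpha>. monomial I \<alpha> (from_coords I t) *\<^sub>R c \<alpha> j) has_sum F (\<lambda>i. x i + from_coords I t i) j)
                 (multi_indices (I \<times> Basis))"
      using c[rule_format, OF from_coords_in_coord_space _ assms(2)] by blast
    from has_sum_bounded_linear[OF bounded_linear_inner_left this, of b]
    show "((\<lambda>\<alpha>. (c \<alpha> j \<bullet> b) * real_monom (I \<times> Basis) \<alpha> t) has_sum F (\<lambda>i. x i + from_coords I t i) j \<bullet> b)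
            (multi_indices (I \<times> Basis))"
      by (simp add: monomial_from_coords mult.commute)
  qed
qed

lemma real_analytic_atI:
  fixes F :: "('i \<Rightarrow> 'a::euclidean_space) \<Rightarrow> ('j \<Rightarrow> 'a)"
  assumes "finite J" and "\<And>j b. j \<in> J \<Longrightarrow> b \<in> Basis \<Longrightarrow> analytic_scalar_at I (\<lambda>z. F z j \<bullet> b) x"
  shows "real_analytic_at I J F x"
proof -
  have "\<And>q. q \<in> J \<times> Basis \<Longrightarrow> analytic_scalar_at I (\<lambda>z. F z (fst q) \<bullet> snd q) x"
    using assms(2) by auto
  with assms(1) have "\<exists>r>0. \<exists>A. \<forall>q\<in>J \<times> Basis.
      has_power_series (I \<times> Basis) r (A q) (\<lambda>t. F (\<lambda>i. x i + from_coords I t i) (fst q) \<bullet> snd q)"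
    by (intro analytic_scalar_at_common_radius) auto
  then obtain r A where r: "r > 0" and A: "\<forall>q\<in>J \<times> Basis.
      has_power_series (I \<times> Basis) r (A q) (\<lambda>t. F (\<lambda>i. x i + from_coords I t i) (fst q) \<bullet> snd q)"
    by blast
  show ?thesis
    unfolding real_analytic_at_def
  proof (intro exI[of _ r] conjI exI[of _ "\<lambda>\<alpha> j. \<Sum>b\<in>Basis. A (j, b) \<alpha> *\<^sub>R b"] ballI impI r)
    fix h :: "'i \<Rightarrow> 'a" and j assume h: "h \<in> coord_space I" "\<forall>i\<in>I. norm (h i) < r" and j: "j \<in> J"
    have "((\<lambda>\<alpha>. A (j, b) \<alpha> * real_monom (I \<times> Basis) \<alpha> (coords h)) has_sum F (\<lambda>i. x i + h i) j \<bullet> b)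
            (multi_indices (I \<times> Basis))" if b: "b \<in> Basis" for b
    proof -
      have small: "\<bar>coords h p\<bar> < r" if "p \<in> I \<times> Basis" for p
        using abs_coords_le[of "snd p" h "fst p"] h(2) that by force
      have "has_power_series (I \<times> Basis) r (A (j, b)) (\<lambda>t. F (\<lambda>i. x i + from_coords I t i) j \<bullet> b)"
        using A j b by auto
      from has_power_seriesD[where t="coords h", OF this small] show ?thesis
        by (simp add: from_coords_coords[OF h(1)])
    qed
    then have "((\<lambda>\<alpha>. \<Sum>b\<in>Basis. (A (j, b) \<alpha> * real_monom (I \<times> Basis) \<alpha> (coords h)) *\<^sub>R b) has_sum
                 (\<Sum>b\<in>Basis. (F (\<lambda>i. x i + h i) j \<bullet> b) *\<^sub>R b)) (multi_indices (I \<times> Basis))"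
      by (intro has_sum_sum_finite_family has_sum_bounded_linear[OF bounded_linear_scaleR_left]) auto
    then show "((\<lambda>\<alpha>. monomial I \<alpha> h *\<^sub>R (\<Sum>b\<in>Basis. A (j, b) \<alpha> *\<^sub>R b)) has_sum F (\<lambda>i. x i + h i) j)
                 (multi_indices (I \<times> Basis))"
      by (simp add: euclidean_representation monomial_eq_real_monom scaleR_sum_right mult.commute)
  qed
qed

lemma analytic_scalar_at_continuous:
  fixes x :: "'i \<Rightarrow> 'a::euclidean_space"
  assumes "finite I" "analytic_scalar_at I \<phi> x" "\<delta> > 0"
  shows "\<exists>r>0. \<forall>h\<in>coord_space I. (\<forall>i\<in>I. norm (h i) < r) \<longrightarrow> \<bar>\<phi> (\<lambda>i. x i + h i) - \<phi> x\<bar> < \<delta>"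
proof -
  let ?P = "I \<times> (Basis::'a set)"
  have fP: "finite ?P" using assms(1) by simp
  obtain r a where r: "r > 0" and a: "has_power_series ?P r a (\<lambda>t. \<phi> (\<lambda>i. x i + from_coords I t i))"
    using assms(2) unfolding analytic_scalar_at_def by blast
  define a' where "a' = (\<lambda>\<alpha>. if \<alpha> = (\<lambda>_. 0) then 0 else a \<alpha>)"
  have a': "has_power_series ?P r a' (\<lambda>t. \<phi> (\<lambda>i. x i + from_coords I t i) - \<phi> x)"
    using has_power_series_drop_constant[OF fP r a] by (simp add: a'_def)
  define \<tau> where "\<tau> = r / 2"
  have \<tau>: "0 < \<tau>" "\<tau> < r" using r by (auto simp: \<tau>_def)
  define A where "A = infsum (\<lambda>\<alpha>. \<bar>a' \<alpha>\<bar> * \<tau> ^ multi_degree ?P \<alpha>) (multi_indices ?P)"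
  obtain \<epsilon> where \<epsilon>: "0 < \<epsilon>" "\<epsilon> \<le> 1" and \<epsilon>A: "\<epsilon> * A < \<delta>"
    using small_common_factor[of "{()}" \<delta> "\<lambda>_. A"] assms(3) by auto
  have "\<epsilon> * \<tau> \<le> \<tau>" using \<epsilon> \<tau> by (intro mult_left_le_one_le) auto
  show ?thesis
  proof (intro exI[of _ "\<epsilon> * \<tau>"] conjI ballI impI)
    show "0 < \<epsilon> * \<tau>" using \<epsilon> \<tau> by simp
    fix h :: "'i \<Rightarrow> 'a" assume h: "h \<in> coord_space I" "\<forall>i\<in>I. norm (h i) < \<epsilon> * \<tau>"
    have t_le: "\<bar>coords h p\<bar> \<le> \<epsilon> * \<tau>" if "p \<in> ?P" for p
      using abs_coords_le[of "snd p" h "fst p"] h(2) that by force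
    have t_less: "\<bar>coords h p\<bar> < r" if "p \<in> ?P" for p
      using t_le[OF that] \<open>\<epsilon> * \<tau> \<le> \<tau>\<close> \<tau> by linarith
    note bound = has_power_series_abs_bound[where t="coords h",
        OF fP a' _ \<tau> less_imp_le[OF \<epsilon>(1)] \<epsilon>(2) t_le]
    have "((\<lambda>\<alpha>. a' \<alpha> * real_monom ?P \<alpha> (coords h)) has_sum \<phi> (\<lambda>i. x i + h i) - \<phi> x) (multi_indices ?P)"
      using has_power_seriesD[where t="coords h", OF a' t_less] by (simp add: from_coords_coords[OF h(1)])
    then have "\<bar>\<phi> (\<lambda>i. x i + h i) - \<phi> x\<bar>
                 \<le> infsum (\<lambda>\<alpha>. \<bar>a' \<alpha> * real_monom ?P \<alpha> (coords h)\<bar>) (multi_indices ?P)"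
      by (rule abs_has_sum_le_infsum_abs) (rule bound(1), simp add: a'_def)
    also have "\<dots> \<le> \<epsilon> * A"
      unfolding A_def by (rule bound(2)) (simp add: a'_def)
    finally show "\<bar>\<phi> (\<lambda>i. x i + h i) - \<phi> x\<bar> < \<delta>" using \<epsilon>A by linarith
  qed
qed

lemma real_analytic_at_continuous:
  fixes F :: "('i \<Rightarrow> 'a::euclidean_space) \<Rightarrow> ('j \<Rightarrow> 'a)"
  assumes "finite I" "finite J" "real_analytic_at I J F x" "\<delta> > 0"
  shows "\<exists>r>0. \<forall>h\<in>coord_space I. (\<forall>i\<in>I. norm (h i) < r) \<longrightarrow> (\<forall>j\<in>J. norm (F (\<lambda>i. x i + h i) j - F x j) < \<delta>)"
proof -
  define \<delta>' where "\<delta>' = \<delta> / real DIM('a)"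
  have \<delta>': "\<delta>' > 0" using assms(4) by (simp add: \<delta>'_def)
  have "\<forall>q\<in>J \<times> (Basis::'a set). \<exists>r>0. \<forall>h\<in>coord_space I. (\<forall>i\<in>I. norm (h i) < r) \<longrightarrow>
          \<bar>F (\<lambda>i. x i + h i) (fst q) \<bullet> snd q - F x (fst q) \<bullet> snd q\<bar> < \<delta>'"
  proof
    fix q :: "'j \<times> 'a" assume "q \<in> J \<times> Basis"
    then have "analytic_scalar_at I (\<lambda>z. F z (fst q) \<bullet> snd q) x"
      using real_analytic_at_component[OF assms(3)] by (cases q) auto
    from analytic_scalar_at_continuous[OF assms(1) this \<delta>'] show "\<exists>r>0. \<forall>h\<in>coord_space I.
        (\<forall>i\<in>I. norm (h i) < r) \<longrightarrow> \<bar>F (\<lambda>i. x i + h i) (fst q) \<bullet> snd q - F x (fst q) \<bullet> snd q\<bar> < \<delta>'" .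
  qed
  from bchoice[OF this] obtain R where R: "\<forall>q\<in>J \<times> (Basis::'a set). R q > 0 \<and>
      (\<forall>h\<in>coord_space I. (\<forall>i\<in>I. norm (h i) < R q) \<longrightarrow>
          \<bar>F (\<lambda>i. x i + h i) (fst q) \<bullet> snd q - F x (fst q) \<bullet> snd q\<bar> < \<delta>')"
    by blast
  obtain r where r: "r > 0" "\<And>q. q \<in> J \<times> (Basis::'a set) \<Longrightarrow> r \<le> R q"
    using finite_common_radius[of "J \<times> (Basis::'a set)" R] assms(2) R by auto
  show ?thesis
  proof (intro exI[of _ r] conjI ballI impI r(1))
    fix h :: "'i \<Rightarrow> 'a" and j assume h: "h \<in> coord_space I" "\<forall>i\<in>I. norm (h i) < r" and j: "j \<in> J"
    have "norm (F (\<lambda>i. x i + h i) j - F x j) \<le> (\<Sum>b\<in>Basis. \<bar>(F (\<lambda>i. x i + h i) j - F x j) \<bullet> b\<bar>)"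
      by (rule norm_le_l1)
    also have "\<dots> < (\<Sum>b\<in>(Basis::'a set). \<delta>')"
    proof (rule sum_strict_mono)
      fix b :: 'a assume b: "b \<in> Basis"
      have "\<forall>i\<in>I. norm (h i) < R (j, b)" using h r(2)[of "(j, b)"] j b by force
      then show "\<bar>(F (\<lambda>i. x i + h i) j - F x j) \<bullet> b\<bar> < \<delta>'"
        using R j b h(1) by (force simp: inner_diff_left)
    qed auto
    also have "\<dots> = \<delta>" by (simp add: \<delta>'_def)
    finally show "norm (F (\<lambda>i. x i + h i) j - F x j) < \<delta>" .
  qed
qed

lemma analytic_scalar_at_coordinate:
  fixes x :: "'i \<Rightarrow> 'a::euclidean_space"
  assumes "finite I" "v \<in> I" "b \<in> Basis"
  shows "analytic_scalar_at I (\<lambda>z. z v \<bullet> b) x"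
proof -
  let ?P = "I \<times> (Basis::'a set)"
  define \<delta> where "\<delta> = (\<lambda>p. if p = (v, b) then 1 else (0::nat))"
  define a where "a \<alpha> = (if \<alpha> = (\<lambda>_. 0) then x v \<bullet> b else if \<alpha> = \<delta> then 1 else 0)" for \<alpha>
  have \<delta>: "\<delta> \<in> multi_indices ?P" "\<delta> \<noteq> (\<lambda>_. 0)"
    using assms(2,3) by (auto simp: multi_indices_def \<delta>_def fun_eq_iff)
  have monom_\<delta>: "real_monom ?P \<delta> t = t (v, b)" for t
  proof -
    have "real_monom ?P \<delta> t = (\<Prod>p\<in>?P. if p = (v, b) then t p else 1)"
      unfolding real_monom_def \<delta>_def by (intro prod.cong) auto
    also have "\<dots> = t (v, b)" using assms by (subst prod.delta) auto
    finally show ?thesis .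
  qed
  show ?thesis
    unfolding analytic_scalar_at_def has_power_series_def
  proof (intro exI[of _ 1] conjI exI[of _ a] allI impI)
    fix t :: "'i \<times> 'a \<Rightarrow> real"
    have "(x v + from_coords I t v) \<bullet> b = x v \<bullet> b + t (v, b)"
      using coords_from_coords[OF assms(2,3), of t] by (simp add: coords_def inner_add_left)
    then show "((\<lambda>\<alpha>. a \<alpha> * real_monom ?P \<alpha> t) has_sum (x v + from_coords I t v) \<bullet> b) (multi_indices ?P)"
      using \<delta> by (intro has_sum_finite_neutralI[where B="{\<lambda>_. 0, \<delta>}"]) (auto simp: a_def monom_\<delta>)
  qed simp
qed

lemma analytic_scalar_at_compose:
  fixes \<Phi> :: "('i \<Rightarrow> 'a::euclidean_space) \<Rightarrow> ('j \<Rightarrow> 'a)" and G :: "('j \<Rightarrow> 'a) \<Rightarrow> ('k \<Rightarrow> 'a)"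
  assumes "finite I" "finite J"
    and \<Phi>: "\<And>j b. j \<in> J \<Longrightarrow> b \<in> Basis \<Longrightarrow> analytic_scalar_at I (\<lambda>z. \<Phi> z j \<bullet> b) x"
    and \<Phi>_coords: "\<And>z. \<Phi> z \<in> coord_space J"
    and G: "real_analytic_at J K G (\<Phi> x)" and "k \<in> K" "b' \<in> Basis"
  shows "analytic_scalar_at I (\<lambda>z. G (\<Phi> z) k \<bullet> b') x"
proof -
  let ?P = "I \<times> (Basis::'a set)" and ?Q = "J \<times> (Basis::'a set)"
  have fin: "finite ?P" "finite ?Q" using assms(1,2) by auto
  have "\<And>q. q \<in> ?Q \<Longrightarrow> analytic_scalar_at I (\<lambda>z. \<Phi> z (fst q) \<bullet> snd q) x"
    using \<Phi> by auto
  with fin(2) have "\<exists>r>0. \<exists>A. \<forall>q\<in>?Q.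
      has_power_series ?P r (A q) (\<lambda>t. \<Phi> (\<lambda>i. x i + from_coords I t i) (fst q) \<bullet> snd q)"
    by (intro analytic_scalar_at_common_radius) auto
  then obtain r A where r: "r > 0" and A: "\<forall>q\<in>?Q.
      has_power_series ?P r (A q) (\<lambda>t. \<Phi> (\<lambda>i. x i + from_coords I t i) (fst q) \<bullet> snd q)"
    by blast
  define u where
    "u = (\<lambda>(q :: 'j \<times> 'a) t. \<Phi> (\<lambda>i. x i + from_coords I t i) (fst q) \<bullet> snd q - \<Phi> x (fst q) \<bullet> snd q)"
  have inner: "has_power_series ?P r (\<lambda>\<alpha>. if \<alpha> = (\<lambda>_. 0) then 0 else A q \<alpha>) (u q)" if "q \<in> ?Q" for q
  proof -
    have "has_power_series ?P r (A q) (\<lambda>t. \<Phi> (\<lambda>i. x i + from_coords I t i) (fst q) \<bullet> snd q)"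
      using A that by blast
    from has_power_series_drop_constant[OF fin(1) r this] show ?thesis by (simp add: u_def)
  qed
  obtain \<rho> d where \<rho>: "\<rho> > 0"
    and d: "has_power_series ?Q \<rho> d (\<lambda>s. G (\<lambda>j. \<Phi> x j + from_coords J s j) k \<bullet> b')"
    using real_analytic_at_component[OF G assms(6,7)] unfolding analytic_scalar_at_def by blast
  obtain r' e where "r' > 0"
    and e: "has_power_series ?P r' e (\<lambda>t. G (\<lambda>j. \<Phi> x j + from_coords J (\<lambda>q. u q t) j) k \<bullet> b')"
    using has_power_series_compose[where a="\<lambda>q \<alpha>. if \<alpha> = (\<lambda>_. 0) then 0 else A q \<alpha>" and u=u,
        OF fin r \<rho> inner _ d] by auto
  moreover have "(\<lambda>j. \<Phi> x j + from_coords J (\<lambda>q. u q t) j) = \<Phi> (\<lambda>i. x i + from_coords I t i)" for t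
    unfolding u_def by (rule add_from_coords_diff[OF \<Phi>_coords \<Phi>_coords])
  ultimately show ?thesis unfolding analytic_scalar_at_def by auto
qed

lemma continuous_on_tuple_map: "continuous_on S (tuple_map ws :: ('v \<Rightarrow> 'b::real_normed_vector) \<Rightarrow> _)"
proof (rule continuous_on_coordinatewise_then_product)
  fix i
  show "continuous_on S (\<lambda>\<phi>. tuple_map ws \<phi> i)"
    by (cases "i < length ws")
       (simp_all add: tuple_map_def continuous_on_product_then_coordinatewise[OF continuous_on_id])
qed

lemma tuple_map_in_coord_space: "tuple_map ws \<phi> \<in> coord_space {..<length ws}"
  by (simp add: tuple_map_def coord_space_def)

lemma open_in_coords_coord_space: "open_in_coords I (coord_space I)"
  by (auto simp: open_in_coords_def coord_space_def intro: exI[of _ 1])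

lemma analytic_restriction_cong:
  "analytic_restriction I J f A \<Longrightarrow> (\<And>x. x \<in> A \<Longrightarrow> f x = g x) \<Longrightarrow> analytic_restriction I J g A"
  unfolding analytic_restriction_def by metis

lemma real_analytic_at_tuple_map:
  assumes "finite V" "set ws \<subseteq> V"
  shows "real_analytic_at V {..<length ws} (tuple_map ws) (x :: 'v \<Rightarrow> 'a::euclidean_space)"
proof (rule real_analytic_atI)
  fix i and b :: 'a assume i: "i \<in> {..<length ws}" and b: "b \<in> Basis"
  have "analytic_scalar_at V (\<lambda>z. z (ws ! i) \<bullet> b) x"
    using assms i b by (intro analytic_scalar_at_coordinate) auto
  then show "analytic_scalar_at V (\<lambda>z. tuple_map ws z i \<bullet> b) x"
    using i by (simp add: tuple_map_def)
qed simp

lemma analytic_restriction_tuple_map: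
  assumes "finite V" "set ws \<subseteq> V" "A \<subseteq> coord_space V"
  shows "analytic_restriction V {..<length ws} (tuple_map ws :: ('v \<Rightarrow> 'a::euclidean_space) \<Rightarrow> _) A"
  unfolding analytic_restriction_def
  using assms open_in_coords_coord_space real_analytic_at_tuple_map by blast

lemma open_in_coords_analytic_preimage:
  fixes F :: "('i \<Rightarrow> 'a::euclidean_space) \<Rightarrow> ('j \<Rightarrow> 'a)"
  assumes "finite I" "finite J" "open_in_coords I W"
    and F: "\<And>x. x \<in> W \<Longrightarrow> real_analytic_at I J F x"
    and "set vs \<subseteq> J" and W': "open_in_coords {..<length vs} W'"
  shows "open_in_coords I {u \<in> W. tuple_map vs (F u) \<in> W'}"
  unfolding open_in_coords_def
proof (intro conjI ballI)
  show "{u \<in> W. tuple_map vs (F u) \<in> W'} \<subseteq> coord_space I"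
    using assms(3) unfolding open_in_coords_def by auto
  fix u assume "u \<in> {u \<in> W. tuple_map vs (F u) \<in> W'}"
  then have u: "u \<in> W" "tuple_map vs (F u) \<in> W'" by auto
  obtain r1 where r1: "r1 > 0"
    "\<forall>h\<in>coord_space I. (\<forall>i\<in>I. norm (h i) < r1) \<longrightarrow> (\<lambda>i. u i + h i) \<in> W"
    using assms(3) u(1) unfolding open_in_coords_def by blast
  obtain r2 where r2: "r2 > 0" "\<forall>h\<in>coord_space {..<length vs}. (\<forall>i\<in>{..<length vs}. norm (h i) < r2) \<longrightarrow>
      (\<lambda>i. tuple_map vs (F u) i + h i) \<in> W'"
    using W' u(2) unfolding open_in_coords_def by blast
  obtain r3 where r3: "r3 > 0" "\<forall>h\<in>coord_space I. (\<forall>i\<in>I. norm (h i) < r3) \<longrightarrow>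
      (\<forall>j\<in>J. norm (F (\<lambda>i. u i + h i) j - F u j) < r2)"
    using real_analytic_at_continuous[OF assms(1,2) F[OF u(1)] r2(1)] by blast
  show "\<exists>r>0. \<forall>h\<in>coord_space I. (\<forall>i\<in>I. norm (h i) < r) \<longrightarrow>
          (\<lambda>i. u i + h i) \<in> {u \<in> W. tuple_map vs (F u) \<in> W'}"
  proof (intro exI[of _ "min r1 r3"] conjI ballI impI)
    show "0 < min r1 r3" using r1 r3 by simp
    fix h :: "'i \<Rightarrow> 'a" assume h: "h \<in> coord_space I" "\<forall>i\<in>I. norm (h i) < min r1 r3"
    define h' where "h' = tuple_map vs (F (\<lambda>i. u i + h i)) - tuple_map vs (F u)"
    have "h' \<in> coord_space {..<length vs}"
      by (simp add: h'_def coord_space_def tuple_map_def)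
    moreover have "\<forall>j\<in>J. norm (F (\<lambda>i. u i + h i) j - F u j) < r2"
      using r3(2) h by simp
    then have "\<forall>i\<in>{..<length vs}. norm (h' i) < r2"
      using assms(5) by (auto simp: h'_def tuple_map_def dest!: nth_mem)
    ultimately have "(\<lambda>i. tuple_map vs (F u) i + h' i) \<in> W'" using r2(2) by blast
    then show "(\<lambda>i. u i + h i) \<in> {u \<in> W. tuple_map vs (F u) \<in> W'}"
      using r1(2) h by (simp add: h'_def)
  qed
qed

section \<open>Gluing two linkages\<close>

lemma config_space_fixed: "\<phi> \<in> config_space L \<Longrightarrow> v \<in> fixed L \<Longrightarrow> \<phi> v = pos L v"
  by (simp add: config_space_def)

lemma config_space_dist_le:
  "\<phi> \<in> config_space L \<Longrightarrow> e \<in> flex L \<Longrightarrow> dist (\<phi> (fst (ends L e))) (\<phi> (snd (ends L e))) \<le> len L e"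
  by (simp add: config_space_def)

lemma config_space_dist_eq:
  "\<phi> \<in> config_space L \<Longrightarrow> e \<in> edges L - flex L \<Longrightarrow> dist (\<phi> (fst (ends L e))) (\<phi> (snd (ends L e))) = len L e"
  by (simp add: config_space_def)

lemma Inl_in_Plus_iff [simp]: "Inl a \<in> A <+> B \<longleftrightarrow> a \<in> A"
  by auto

lemma Inr_in_Plus_iff [simp]: "Inr b \<in> A <+> B \<longleftrightarrow> b \<in> B"
  by auto

locale linkage_gluing =
  fixes L :: "('v, 'e, 'a::euclidean_space) linkage" and L' :: "('w, 'f, 'a) linkage"
    and vs :: "'v list" and ws' :: "'w list"
  assumes cabled: "cabled_linkage L" "cabled_linkage L'"
    and vs_verts: "set vs \<subseteq> verts L" and ws'_verts: "set ws' \<subseteq> verts L'"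
    and length_eq: "length ws' = length vs"
begin

abbreviation "eqv \<equiv> glue_rel L L' vs ws'"
abbreviation "disj_verts \<equiv> verts L <+> verts L'"
abbreviation "classes \<equiv> disj_verts // eqv"
abbreviation "ident \<equiv> {(Inl (vs ! i), Inr (ws' ! i)) | i. i < length vs} :: (('v + 'w) \<times> ('v + 'w)) set"
abbreviation "LL \<equiv> glue L L' vs ws'"
abbreviation "fixed_union \<equiv> fixed L <+> fixed L'"
abbreviation "pos_union \<equiv> case_sum (pos L) (pos L')"

definition class_of :: "'v + 'w \<Rightarrow> ('v + 'w) set" where
  "class_of x = eqv `` {x}"

definition compatible :: "('v \<Rightarrow> 'a) \<Rightarrow> ('w \<Rightarrow> 'a) \<Rightarrow> bool" where
  "compatible \<phi> \<psi> \<longleftrightarrow> (\<forall>i<length vs. \<phi> (vs ! i) = \<psi> (ws' ! i))"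

definition glued_config :: "('v \<Rightarrow> 'a) \<Rightarrow> ('w \<Rightarrow> 'a) \<Rightarrow> ('v + 'w) set \<Rightarrow> 'a" where
  "glued_config \<phi> \<psi> X =
     (if X \<in> classes then
        (if \<exists>v. Inl v \<in> X then \<phi> (SOME v. Inl v \<in> X) else \<psi> (SOME w. Inr w \<in> X))
      else 0)"

definition left_part :: "(('v + 'w) set \<Rightarrow> 'a) \<Rightarrow> 'v \<Rightarrow> 'a" where
  "left_part \<Phi> = (\<lambda>v. if v \<in> verts L then \<Phi> (class_of (Inl v)) else 0)"

definition right_part :: "(('v + 'w) set \<Rightarrow> 'a) \<Rightarrow> 'w \<Rightarrow> 'a" where
  "right_part \<Phi> = (\<lambda>w. if w \<in> verts L' then \<Phi> (class_of (Inr w)) else 0)"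

lemma glue_rel_eq: "eqv = Id_on disj_verts \<union> (ident \<union> ident\<inverse>)\<^sup>+"
  unfolding glue_rel_def Let_def by simp

lemma ident_subset: "ident \<union> ident\<inverse> \<subseteq> disj_verts \<times> disj_verts"
  using vs_verts ws'_verts length_eq by auto

lemma finite_verts: "finite (verts L)" "finite (verts L')"
  using cabled unfolding cabled_linkage_def by blast+

lemma ends_in_verts:
  "e \<in> edges L \<Longrightarrow> fst (ends L e) \<in> verts L \<and> snd (ends L e) \<in> verts L"
  "e' \<in> edges L' \<Longrightarrow> fst (ends L' e') \<in> verts L' \<and> snd (ends L' e') \<in> verts L'"
  using cabled unfolding cabled_linkage_def by blast+

lemma flex_subset: "flex L \<subseteq> edges L" "flex L' \<subseteq> edges L'"
  using cabled unfolding cabled_linkage_def by blast+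

lemma fixed_subset: "fixed L \<subseteq> verts L" "fixed L' \<subseteq> verts L'"
  using cabled unfolding cabled_linkage_def by blast+

lemma equiv_glue_rel: "equiv disj_verts eqv"
  unfolding equiv_def glue_rel_eq
proof (intro conjI)
  have closure: "(ident \<union> ident\<inverse>)\<^sup>+ \<subseteq> disj_verts \<times> disj_verts"
    using ident_subset by (rule trancl_subset_Sigma)
  then show "Id_on disj_verts \<union> (ident \<union> ident\<inverse>)\<^sup>+ \<subseteq> disj_verts \<times> disj_verts"
    by auto
  show "refl_on disj_verts (Id_on disj_verts \<union> (ident \<union> ident\<inverse>)\<^sup>+)"
    by (auto simp: refl_on_def)
  have "sym ((ident \<union> ident\<inverse>)\<^sup>+)" by (intro sym_trancl) (auto simp: sym_def)
  then show "sym (Id_on disj_verts \<union> (ident \<union> ident\<inverse>)\<^sup>+)"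
    by (auto simp: sym_def)
  show "trans (Id_on disj_verts \<union> (ident \<union> ident\<inverse>)\<^sup>+)"
    unfolding trans_def by (auto intro: trancl_trans)
qed

lemma ident_in_glue_rel: "i < length vs \<Longrightarrow> (Inl (vs ! i), Inr (ws' ! i)) \<in> eqv"
  unfolding glue_rel_eq by blast

lemma class_of_eq: "(x, y) \<in> eqv \<Longrightarrow> class_of x = class_of y"
  unfolding class_of_def by (rule equiv_class_eq[OF equiv_glue_rel])

lemma class_of_in_classes: "x \<in> disj_verts \<Longrightarrow> class_of x \<in> classes"
  unfolding class_of_def by (rule quotientI)

lemma in_class_of: "x \<in> disj_verts \<Longrightarrow> x \<in> class_of x"
  unfolding class_of_def by (rule equiv_class_self[OF equiv_glue_rel])

lemma classes_subset: "X \<in> classes \<Longrightarrow> X \<subseteq> disj_verts"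
  using equiv_glue_rel by (metis Union_quotient Union_upper)

lemma classes_eq_class_of:
  assumes "X \<in> classes" "x \<in> X"
  shows "X = class_of x"
proof -
  from assms(1) obtain y where y: "X = eqv `` {y}" by (rule quotientE)
  with assms(2) have "(y, x) \<in> eqv" by simp
  then show ?thesis unfolding y class_of_def by (rule equiv_class_eq[OF equiv_glue_rel])
qed

lemma classes_nonempty: "X \<in> classes \<Longrightarrow> X \<noteq> {}"
  using equiv_glue_rel by (metis in_quotient_imp_non_empty)

lemma finite_classes: "finite classes"
proof (rule finite_quotient)
  show "eqv \<subseteq> disj_verts \<times> disj_verts"
    using equiv_glue_rel by (simp add: equiv_type)
qed (use finite_verts in auto)

lemma compatible_glue_rel:
  assumes "compatible \<phi> \<psi>" "(x, y) \<in> eqv"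
  shows "case_sum \<phi> \<psi> x = case_sum \<phi> \<psi> y"
proof -
  have "case_sum \<phi> \<psi> x = case_sum \<phi> \<psi> y" if "(x, y) \<in> (ident \<union> ident\<inverse>)\<^sup>+"
    using that by induction (use assms(1) in \<open>auto simp: compatible_def\<close>)
  then show ?thesis using assms(2) unfolding glue_rel_eq by auto
qed

lemma glued_config_eq:
  assumes "compatible \<phi> \<psi>" "X \<in> classes" "x \<in> X"
  shows "glued_config \<phi> \<psi> X = case_sum \<phi> \<psi> x"
proof -
  have rel: "(x, y) \<in> eqv" if "y \<in> X" for y
    using that classes_eq_class_of[OF assms(2,3)] by (simp add: class_of_def)
  show ?thesis
  proof (cases "\<exists>v. Inl v \<in> X")
    case True
    then have "Inl (SOME v. Inl v \<in> X) \<in> X" by (rule someI_ex)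
    from compatible_glue_rel[OF assms(1) rel[OF this]] show ?thesis
      using True assms(2) by (simp add: glued_config_def)
  next
    case False
    then obtain w where "x = Inr w" using assms(3) by (cases x) auto
    then have "\<exists>w. Inr w \<in> X" using assms(3) by blast
    then have "Inr (SOME w. Inr w \<in> X) \<in> X" by (rule someI_ex)
    from compatible_glue_rel[OF assms(1) rel[OF this]] show ?thesis
      using False assms(2) by (simp add: glued_config_def)
  qed
qed

lemma glued_config_Inl: "compatible \<phi> \<psi> \<Longrightarrow> v \<in> verts L \<Longrightarrow> glued_config \<phi> \<psi> (class_of (Inl v)) = \<phi> v"
  using glued_config_eq[of \<phi> \<psi> "class_of (Inl v)" "Inl v"] class_of_in_classes in_class_of by simp

lemma glued_config_Inr: "compatible \<phi> \<psi> \<Longrightarrow> w \<in> verts L' \<Longrightarrow> glued_config \<phi> \<psi> (class_of (Inr w)) = \<psi> w"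
  using glued_config_eq[of \<phi> \<psi> "class_of (Inr w)" "Inr w"] class_of_in_classes in_class_of by simp

lemma glue_simps:
  "verts LL = classes" "edges LL = edges L <+> edges L'"
  "ends LL (Inl e) = (class_of (Inl (fst (ends L e))), class_of (Inl (snd (ends L e))))"
  "ends LL (Inr e') = (class_of (Inr (fst (ends L' e'))), class_of (Inr (snd (ends L' e'))))"
  "len LL (Inl e) = len L e" "len LL (Inr e') = len L' e'"
  "fixed LL = {X \<in> classes. X \<inter> fixed_union \<noteq> {}}"
  "pos LL X = pos_union (SOME x. x \<in> X \<inter> fixed_union)"
  "flex LL = flex L <+> flex L'"
  by (simp_all add: glue_def Let_def class_of_def)

lemma glue_inputs_eq: "glue_inputs L L' vs ws' ws = map (\<lambda>v. class_of (Inl v)) ws"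
  by (simp add: glue_inputs_def class_of_def)

lemma glue_outputs_eq: "glue_outputs L L' vs ws' vs' = map (\<lambda>w. class_of (Inr w)) vs'"
  by (simp add: glue_outputs_def class_of_def)

lemma left_part_glued_config:
  "\<phi> \<in> config_space L \<Longrightarrow> compatible \<phi> \<psi> \<Longrightarrow> left_part (glued_config \<phi> \<psi>) = \<phi>"
  by (auto simp: fun_eq_iff left_part_def glued_config_Inl config_space_def)

lemma right_part_glued_config:
  "\<psi> \<in> config_space L' \<Longrightarrow> compatible \<phi> \<psi> \<Longrightarrow> right_part (glued_config \<phi> \<psi>) = \<psi>"
  by (auto simp: fun_eq_iff right_part_def glued_config_Inr config_space_def)

lemma fixed_union_value:
  "\<phi> \<in> config_space L \<Longrightarrow> \<psi> \<in> config_space L' \<Longrightarrow> x \<in> fixed_union \<Longrightarrow> case_sum \<phi> \<psi> x = pos_union x"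
  by (cases x) (auto simp: config_space_def)

lemma glued_config_in_config_space:
  assumes \<phi>: "\<phi> \<in> config_space L" and \<psi>: "\<psi> \<in> config_space L'" and c: "compatible \<phi> \<psi>"
  shows "glued_config \<phi> \<psi> \<in> config_space LL"
  unfolding config_space_def mem_Collect_eq
proof (intro conjI allI impI ballI)
  fix X assume "X \<notin> verts LL"
  then show "glued_config \<phi> \<psi> X = 0" by (simp add: glue_simps glued_config_def)
next
  fix X assume "X \<in> fixed LL"
  then have X: "X \<in> classes" and "X \<inter> fixed_union \<noteq> {}" by (auto simp: glue_simps)
  then have "(SOME x. x \<in> X \<inter> fixed_union) \<in> X \<inter> fixed_union" by (metis ex_in_conv someI_ex)
  then have "glued_config \<phi> \<psi> X = pos_union (SOME x. x \<in> X \<inter> fixed_union)"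
    using glued_config_eq[OF c X] fixed_union_value[OF \<phi> \<psi>] by (metis IntD1 IntD2)
  then show "glued_config \<phi> \<psi> X = pos LL X" by (simp only: glue_simps)
next
  fix e assume "e \<in> flex LL"
  then consider e1 where "e = Inl e1" "e1 \<in> flex L" | e2 where "e = Inr e2" "e2 \<in> flex L'"
    by (auto simp: glue_simps)
  then show "dist (glued_config \<phi> \<psi> (fst (ends LL e))) (glued_config \<phi> \<psi> (snd (ends LL e))) \<le> len LL e"
    by cases (use \<phi> \<psi> c flex_subset ends_in_verts in
              \<open>auto simp: glue_simps glued_config_Inl glued_config_Inr config_space_def\<close>)
next
  fix e assume "e \<in> edges LL - flex LL"
  then consider e1 where "e = Inl e1" "e1 \<in> edges L - flex L"
    | e2 where "e = Inr e2" "e2 \<in> edges L' - flex L'"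
    by (auto simp: glue_simps)
  then show "dist (glued_config \<phi> \<psi> (fst (ends LL e))) (glued_config \<phi> \<psi> (snd (ends LL e))) = len LL e"
    by cases (use \<phi> \<psi> c ends_in_verts in
              \<open>auto simp: glue_simps glued_config_Inl glued_config_Inr config_space_def\<close>)
qed

text \<open>The glued linkage pins a class containing fixed vertices at the prescribed position of an
  arbitrarily chosen one of them, so its configurations restrict to configurations of L and L'
  only if all fixed vertices of a class have the same prescribed position.\<close>
definition fixed_positions_agree :: bool where
  "fixed_positions_agree \<longleftrightarrow>
     (\<forall>X\<in>classes. \<forall>x\<in>X \<inter> fixed_union. \<forall>y\<in>X \<inter> fixed_union. pos_union x = pos_union y)"

lemma fixed_positions_agreeI:
  assumes \<phi>: "\<phi> \<in> config_space L" and \<psi>: "\<psi> \<in> config_space L'" and c: "compatible \<phi> \<psi>"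
  shows fixed_positions_agree
  unfolding fixed_positions_agree_def
proof (intro ballI)
  fix X x y assume X: "X \<in> classes" and x: "x \<in> X \<inter> fixed_union" and y: "y \<in> X \<inter> fixed_union"
  have "case_sum \<phi> \<psi> x = glued_config \<phi> \<psi> X"
    using x by (intro glued_config_eq[OF c X, symmetric]) blast
  also have "\<dots> = case_sum \<phi> \<psi> y"
    using y by (intro glued_config_eq[OF c X]) blast
  finally have "case_sum \<phi> \<psi> x = case_sum \<phi> \<psi> y" .
  moreover have "case_sum \<phi> \<psi> x = pos_union x" "case_sum \<phi> \<psi> y = pos_union y"
    using fixed_union_value[OF \<phi> \<psi>] x y by auto
  ultimately show "pos_union x = pos_union y" by simp
qed

lemma config_at_fixed_class:
  assumes agree: fixed_positions_agree and \<Phi>: "\<Phi> \<in> config_space LL" and x: "x \<in> fixed_union"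
  shows "\<Phi> (class_of x) = pos_union x"
proof -
  define X where "X = class_of x"
  have "x \<in> disj_verts" using x fixed_subset by blast
  then have X: "X \<in> classes" and xX: "x \<in> X \<inter> fixed_union"
    using x class_of_in_classes in_class_of unfolding X_def by auto
  then have "X \<in> fixed LL" unfolding glue_simps by blast
  then have "\<Phi> X = pos_union (SOME y. y \<in> X \<inter> fixed_union)"
    using config_space_fixed[OF \<Phi>] unfolding glue_simps by blast
  also have "\<dots> = pos_union x"
  proof -
    have some: "(SOME y. y \<in> X \<inter> fixed_union) \<in> X \<inter> fixed_union"
      using xX by (rule someI)
    from agree X have "\<forall>y\<in>X \<inter> fixed_union. \<forall>z\<in>X \<inter> fixed_union. pos_union y = pos_union z"
      unfolding fixed_positions_agree_def by (rule bspec)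
    from this[rule_format, OF some xX] show ?thesis .
  qed
  finally show ?thesis unfolding X_def .
qed

lemma left_part_in_config_space:
  assumes agree: fixed_positions_agree and \<Phi>: "\<Phi> \<in> config_space LL"
  shows "left_part \<Phi> \<in> config_space L"
  unfolding config_space_def mem_Collect_eq
proof (intro conjI allI impI ballI)
  fix v assume "v \<notin> verts L"
  then show "left_part \<Phi> v = 0" by (simp add: left_part_def)
next
  fix v assume "v \<in> fixed L"
  then show "left_part \<Phi> v = pos L v"
    using fixed_subset config_at_fixed_class[OF agree \<Phi>, of "Inl v"] by (auto simp: left_part_def)
next
  fix e assume e: "e \<in> flex L"
  then have "Inl e \<in> flex LL" by (simp add: glue_simps)
  then have "dist (\<Phi> (fst (ends LL (Inl e)))) (\<Phi> (snd (ends LL (Inl e)))) \<le> len LL (Inl e)"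
    by (rule config_space_dist_le[OF \<Phi>])
  moreover have "fst (ends L e) \<in> verts L" "snd (ends L e) \<in> verts L"
    using e flex_subset ends_in_verts by auto
  ultimately show "dist (left_part \<Phi> (fst (ends L e))) (left_part \<Phi> (snd (ends L e))) \<le> len L e"
    by (simp add: glue_simps left_part_def)
next
  fix e assume e: "e \<in> edges L - flex L"
  then have "Inl e \<in> edges LL - flex LL" by (simp add: glue_simps)
  then have "dist (\<Phi> (fst (ends LL (Inl e)))) (\<Phi> (snd (ends LL (Inl e)))) = len LL (Inl e)"
    by (rule config_space_dist_eq[OF \<Phi>])
  moreover have "fst (ends L e) \<in> verts L" "snd (ends L e) \<in> verts L"
    using e ends_in_verts by auto
  ultimately show "dist (left_part \<Phi> (fst (ends L e))) (left_part \<Phi> (snd (ends L e))) = len L e"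
    by (simp add: glue_simps left_part_def)
qed

lemma right_part_in_config_space:
  assumes agree: fixed_positions_agree and \<Phi>: "\<Phi> \<in> config_space LL"
  shows "right_part \<Phi> \<in> config_space L'"
  unfolding config_space_def mem_Collect_eq
proof (intro conjI allI impI ballI)
  fix w assume "w \<notin> verts L'"
  then show "right_part \<Phi> w = 0" by (simp add: right_part_def)
next
  fix w assume "w \<in> fixed L'"
  then show "right_part \<Phi> w = pos L' w"
    using fixed_subset config_at_fixed_class[OF agree \<Phi>, of "Inr w"] by (auto simp: right_part_def)
next
  fix e assume e: "e \<in> flex L'"
  then have "Inr e \<in> flex LL" by (simp add: glue_simps)
  then have "dist (\<Phi> (fst (ends LL (Inr e)))) (\<Phi> (snd (ends LL (Inr e)))) \<le> len LL (Inr e)"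
    by (rule config_space_dist_le[OF \<Phi>])
  moreover have "fst (ends L' e) \<in> verts L'" "snd (ends L' e) \<in> verts L'"
    using e flex_subset ends_in_verts by auto
  ultimately show "dist (right_part \<Phi> (fst (ends L' e))) (right_part \<Phi> (snd (ends L' e))) \<le> len L' e"
    by (simp add: glue_simps right_part_def)
next
  fix e assume e: "e \<in> edges L' - flex L'"
  then have "Inr e \<in> edges LL - flex LL" by (simp add: glue_simps)
  then have "dist (\<Phi> (fst (ends LL (Inr e)))) (\<Phi> (snd (ends LL (Inr e)))) = len LL (Inr e)"
    by (rule config_space_dist_eq[OF \<Phi>])
  moreover have "fst (ends L' e) \<in> verts L'" "snd (ends L' e) \<in> verts L'"
    using e ends_in_verts by auto
  ultimately show "dist (right_part \<Phi> (fst (ends L' e))) (right_part \<Phi> (snd (ends L' e))) = len L' e"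
    by (simp add: glue_simps right_part_def)
qed

lemma compatible_parts: "compatible (left_part \<Phi>) (right_part \<Phi>)"
  unfolding compatible_def
proof (intro allI impI)
  fix i assume i: "i < length vs"
  then have "vs ! i \<in> verts L" "ws' ! i \<in> verts L'" using vs_verts ws'_verts length_eq by auto
  then show "left_part \<Phi> (vs ! i) = right_part \<Phi> (ws' ! i)"
    using class_of_eq[OF ident_in_glue_rel[OF i]] by (simp add: left_part_def right_part_def)
qed

lemma glued_config_parts:
  assumes \<Phi>: "\<Phi> \<in> config_space LL"
  shows "glued_config (left_part \<Phi>) (right_part \<Phi>) = \<Phi>"
proof
  fix X
  show "glued_config (left_part \<Phi>) (right_part \<Phi>) X = \<Phi> X"
  proof (cases "X \<in> classes")
    case False
    then show ?thesis using \<Phi> by (simp add: glued_config_def config_space_def glue_simps)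
  next
    case True
    then obtain x where x: "x \<in> X" using classes_nonempty by blast
    have "x \<in> disj_verts" "X = class_of x" using True x classes_subset classes_eq_class_of by auto
    with glued_config_eq[OF compatible_parts True x] show ?thesis
      by (cases x) (simp_all add: left_part_def right_part_def)
  qed
qed

lemma tuple_map_left_part:
  "set ws \<subseteq> verts L \<Longrightarrow> tuple_map (map (\<lambda>v. class_of (Inl v)) ws) \<Phi> = tuple_map ws (left_part \<Phi>)"
  unfolding tuple_map_def left_part_def by (auto simp: fun_eq_iff dest: nth_mem)

lemma tuple_map_right_part:
  "set vs' \<subseteq> verts L' \<Longrightarrow> tuple_map (map (\<lambda>w. class_of (Inr w)) vs') \<Phi> = tuple_map vs' (right_part \<Phi>)"
  unfolding tuple_map_def right_part_def by (auto simp: fun_eq_iff dest: nth_mem)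

lemma compatible_iff_tuple_map: "compatible \<phi> \<psi> \<longleftrightarrow> tuple_map vs \<phi> = tuple_map ws' \<psi>"
  using length_eq by (auto simp: compatible_def tuple_map_def fun_eq_iff)

lemma continuous_on_glued_config:
  assumes "continuous_on S \<phi>" "continuous_on S \<psi>"
  shows "continuous_on S (\<lambda>x. glued_config (\<phi> x) (\<psi> x))"
proof (rule continuous_on_coordinatewise_then_product)
  fix X
  show "continuous_on S (\<lambda>x. glued_config (\<phi> x) (\<psi> x) X)"
    unfolding glued_config_def using assms
    by (cases "X \<in> classes"; cases "\<exists>v. Inl v \<in> X")
       (simp_all add: continuous_on_product_then_coordinatewise)
qed

lemma continuous_on_left_part: "continuous_on S left_part"
proof (rule continuous_on_coordinatewise_then_product)
  fix v
  show "continuous_on S (\<lambda>\<Phi>. left_part \<Phi> v)"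
    unfolding left_part_def
    by (cases "v \<in> verts L")
       (simp_all add: continuous_on_product_then_coordinatewise[OF continuous_on_id])
qed

lemma continuous_on_right_part: "continuous_on S right_part"
proof (rule continuous_on_coordinatewise_then_product)
  fix w
  show "continuous_on S (\<lambda>\<Phi>. right_part \<Phi> w)"
    unfolding right_part_def
    by (cases "w \<in> verts L'")
       (simp_all add: continuous_on_product_then_coordinatewise[OF continuous_on_id])
qed

lemma real_analytic_at_glued_config:
  fixes F1 :: "('i \<Rightarrow> 'a) \<Rightarrow> ('v \<Rightarrow> 'a)" and F2 :: "(nat \<Rightarrow> 'a) \<Rightarrow> ('w \<Rightarrow> 'a)"
  assumes "finite I"
    and F1: "real_analytic_at I (verts L) F1 x"
    and F2: "real_analytic_at {..<length vs} (verts L') F2 (tuple_map vs (F1 x))"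
  shows "real_analytic_at I classes (\<lambda>u. glued_config (F1 u) (F2 (tuple_map vs (F1 u)))) x"
proof (rule real_analytic_atI[OF finite_classes])
  fix X and b :: 'a assume X: "X \<in> classes" and b: "b \<in> Basis"
  show "analytic_scalar_at I (\<lambda>u. glued_config (F1 u) (F2 (tuple_map vs (F1 u))) X \<bullet> b) x"
  proof (cases "\<exists>v. Inl v \<in> X")
    case True
    define v where "v = (SOME v. Inl v \<in> X)"
    have "Inl v \<in> X" unfolding v_def using True by (rule someI_ex)
    then have "v \<in> verts L" using classes_subset[OF X] by auto
    with real_analytic_at_component[OF F1 _ b] show ?thesis
      using X True by (simp add: glued_config_def v_def)
  next
    case False
    then obtain w' where "Inr w' \<in> X"
      using classes_nonempty[OF X] by (metis equals0I sumE)
    define w where "w = (SOME w. Inr w \<in> X)"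
    have "Inr w \<in> X" unfolding w_def using \<open>Inr w' \<in> X\<close> by (rule someI)
    then have w: "w \<in> verts L'" using classes_subset[OF X] by auto
    have "analytic_scalar_at I (\<lambda>u. F2 (tuple_map vs (F1 u)) w \<bullet> b) x"
    proof (rule analytic_scalar_at_compose[where \<Phi>="\<lambda>u. tuple_map vs (F1 u)", OF assms(1)])
      show "tuple_map vs (F1 u) \<in> coord_space {..<length vs}" for u
        by (rule tuple_map_in_coord_space)
      fix j and b' :: 'a assume j: "j \<in> {..<length vs}" and b': "b' \<in> Basis"
      then have "vs ! j \<in> verts L" using vs_verts by auto
      with real_analytic_at_component[OF F1 _ b'] j
      show "analytic_scalar_at I (\<lambda>u. tuple_map vs (F1 u) j \<bullet> b') x"
        by (simp add: tuple_map_def)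
    qed (use F2 w b in simp_all)
    then show ?thesis using X False by (simp add: glued_config_def w_def)
  qed
qed

lemma analytic_restriction_glued_config:
  fixes s1 :: "('i \<Rightarrow> 'a) \<Rightarrow> ('v \<Rightarrow> 'a)" and s2 :: "(nat \<Rightarrow> 'a) \<Rightarrow> ('w \<Rightarrow> 'a)"
  assumes "finite I"
    and s1: "analytic_restriction I (verts L) s1 A1"
    and s2: "analytic_restriction {..<length ws'} (verts L') s2 A2"
    and "A \<subseteq> A1" and A2: "\<And>u. u \<in> A \<Longrightarrow> tuple_map vs (s1 u) \<in> A2"
  shows "analytic_restriction I classes (\<lambda>u. glued_config (s1 u) (s2 (tuple_map vs (s1 u)))) A"
proof -
  obtain W1 F1 where W1: "open_in_coords I W1" "A1 \<subseteq> W1"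
    and F1: "\<And>x. x \<in> W1 \<Longrightarrow> real_analytic_at I (verts L) F1 x" and s1F1: "\<And>x. x \<in> A1 \<Longrightarrow> s1 x = F1 x"
    using s1 unfolding analytic_restriction_def by blast
  obtain W2 F2 where W2: "open_in_coords {..<length vs} W2" "A2 \<subseteq> W2"
    and F2: "\<And>x. x \<in> W2 \<Longrightarrow> real_analytic_at {..<length vs} (verts L') F2 x"
    and s2F2: "\<And>x. x \<in> A2 \<Longrightarrow> s2 x = F2 x"
    using s2 unfolding analytic_restriction_def length_eq by blast
  show ?thesis
    unfolding analytic_restriction_def
  proof (intro exI conjI ballI)
    show "open_in_coords I {u \<in> W1. tuple_map vs (F1 u) \<in> W2}"
      by (rule open_in_coords_analytic_preimage[OF assms(1) finite_verts(1) W1(1) F1 vs_verts W2(1)])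
    show "A \<subseteq> {u \<in> W1. tuple_map vs (F1 u) \<in> W2}"
      using assms(4) A2 W1(2) W2(2) s1F1 by fastforce
    show "real_analytic_at I classes (\<lambda>u. glued_config (F1 u) (F2 (tuple_map vs (F1 u)))) x"
      if "x \<in> {u \<in> W1. tuple_map vs (F1 u) \<in> W2}" for x
      using that by (intro real_analytic_at_glued_config assms(1) F1 F2) auto
    show "glued_config (s1 u) (s2 (tuple_map vs (s1 u)))
            = glued_config (F1 u) (F2 (tuple_map vs (F1 u)))"
      if "u \<in> A" for u
      using that assms(4) A2 s1F1 s2F2 by auto
  qed
qed

end

section \<open>Composing functional linkages\<close>

lemma homeomorphism_parametrisation:
  assumes "homeomorphism (U \<times> E) D (\<lambda>(u, c). \<sigma> u c) \<sigma>'"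
  shows "\<And>u c. u \<in> U \<Longrightarrow> c \<in> E \<Longrightarrow> \<sigma> u c \<in> D \<and> \<sigma>' (\<sigma> u c) = (u, c)"
    and "\<And>\<phi>. \<phi> \<in> D \<Longrightarrow> \<sigma>' \<phi> \<in> U \<times> E \<and> \<sigma> (fst (\<sigma>' \<phi>)) (snd (\<sigma>' \<phi>)) = \<phi>"
proof -
  have inv: "\<forall>x\<in>U \<times> E. \<sigma>' ((\<lambda>(u, c). \<sigma> u c) x) = x" "\<forall>y\<in>D. (\<lambda>(u, c). \<sigma> u c) (\<sigma>' y) = y"
    and img: "(\<lambda>(u, c). \<sigma> u c) ` (U \<times> E) = D" "\<sigma>' ` D = U \<times> E"
    using assms unfolding homeomorphism_def by blast+
  show "\<sigma> u c \<in> D \<and> \<sigma>' (\<sigma> u c) = (u, c)" if "u \<in> U" "c \<in> E" for u c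
    using that img(1) inv(1) by force
  show "\<sigma>' \<phi> \<in> U \<times> E \<and> \<sigma> (fst (\<sigma>' \<phi>)) (snd (\<sigma>' \<phi>)) = \<phi>" if "\<phi> \<in> D" for \<phi>
    using that img(2) inv(2) by (auto simp: case_prod_unfold)
qed

lemma functional_on_continuous_on:
  assumes "functional_on L ws vs f U"
  shows "continuous_on U f"
proof (cases "U = {}")
  case False
  obtain E :: "nat set" and \<sigma> :: "_ \<Rightarrow> nat \<Rightarrow> _" and \<sigma>' where
    hom: "homeomorphism (U \<times> E) {\<phi> \<in> config_space L. tuple_map ws \<phi> \<in> U} (\<lambda>(u, c). \<sigma> u c) \<sigma>'"
    and input: "\<forall>u\<in>U. \<forall>c\<in>E. tuple_map ws (\<sigma> u c) = u"
    and quasi: "quasifunctional L ws vs f" and U: "U \<subseteq> tuple_map ws ` config_space L"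
    using assms unfolding functional_on_def by blast
  note param = homeomorphism_parametrisation[OF hom]
  obtain \<phi> where "\<phi> \<in> config_space L" "tuple_map ws \<phi> \<in> U" using False U by blast
  then obtain c where c: "c \<in> E" using param(2)[of \<phi>] by auto
  have "continuous_on U (\<lambda>u. (u, c))" "(\<lambda>u. (u, c)) ` U \<subseteq> U \<times> E"
    using c by (auto intro!: continuous_intros)
  from continuous_on_compose2[OF homeomorphism_cont1[OF hom] this]
  have "continuous_on U (\<lambda>u. \<sigma> u c)" by simp
  then have "continuous_on U (\<lambda>u. tuple_map vs (\<sigma> u c))"
    by (rule continuous_on_compose2[OF continuous_on_tuple_map]) auto
  moreover have "tuple_map vs (\<sigma> u c) = f u" if "u \<in> U" for u
    using quasi param(1)[OF that c] input that c unfolding quasifunctional_def by auto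
  ultimately show ?thesis by (rule continuous_on_eq)
qed simp

locale linkage_composition = linkage_gluing L L' vs ws'
  for L :: "('v, 'e, 'a::euclidean_space) linkage" and L' :: "('w, 'f, 'a) linkage"
    and vs :: "'v list" and ws' :: "'w list" +
  fixes ws :: "'v list" and vs' :: "'w list" and f g :: "(nat \<Rightarrow> 'a) \<Rightarrow> (nat \<Rightarrow> 'a)"
    and U U' :: "(nat \<Rightarrow> 'a) set"
  assumes quasi: "quasifunctional L ws vs f" and quasi': "quasifunctional L' ws' vs' g"
    and U_inputs: "U \<subseteq> tuple_map ws ` config_space L"
    and U'_inputs: "U' \<subseteq> tuple_map ws' ` config_space L'"
    and nonempty: "U \<inter> f -` U' \<noteq> {}"
begin

abbreviation "inputs \<equiv> map (\<lambda>v. class_of (Inl v)) ws"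
abbreviation "outputs \<equiv> map (\<lambda>w. class_of (Inr w)) vs'"

lemma ws_verts: "set ws \<subseteq> verts L" and vs'_verts: "set vs' \<subseteq> verts L'"
  using quasi quasi' unfolding quasifunctional_def by auto

lemma output_eq: "\<phi> \<in> config_space L \<Longrightarrow> tuple_map vs \<phi> = f (tuple_map ws \<phi>)"
  using quasi unfolding quasifunctional_def by auto

lemma output_eq': "\<psi> \<in> config_space L' \<Longrightarrow> tuple_map vs' \<psi> = g (tuple_map ws' \<psi>)"
  using quasi' unfolding quasifunctional_def by auto

lemma composition_fixed_positions_agree: fixed_positions_agree
proof -
  obtain u where u: "u \<in> U" "f u \<in> U'" using nonempty by auto
  obtain \<phi> where \<phi>: "\<phi> \<in> config_space L" "tuple_map ws \<phi> = u" using U_inputs u(1) by auto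
  obtain \<psi> where \<psi>: "\<psi> \<in> config_space L'" "tuple_map ws' \<psi> = f u" using U'_inputs u(2) by auto
  have "compatible \<phi> \<psi>" unfolding compatible_iff_tuple_map using output_eq[OF \<phi>(1)] \<phi>(2) \<psi>(2) by simp
  then show ?thesis by (rule fixed_positions_agreeI[OF \<phi>(1) \<psi>(1)])
qed

lemma tuple_map_inputs: "tuple_map inputs \<Phi> = tuple_map ws (left_part \<Phi>)"
  by (rule tuple_map_left_part[OF ws_verts])

lemma tuple_map_outputs: "tuple_map outputs \<Phi> = tuple_map vs' (right_part \<Phi>)"
  by (rule tuple_map_right_part[OF vs'_verts])

lemma parts_in_config_space:
  "\<Phi> \<in> config_space LL \<Longrightarrow> left_part \<Phi> \<in> config_space L \<and> right_part \<Phi> \<in> config_space L'"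
  using left_part_in_config_space[OF composition_fixed_positions_agree]
    right_part_in_config_space[OF composition_fixed_positions_agree] by blast

lemma right_part_inputs:
  "\<Phi> \<in> config_space LL \<Longrightarrow> tuple_map ws' (right_part \<Phi>) = f (tuple_map inputs \<Phi>)"
  using compatible_parts[of \<Phi>] output_eq parts_in_config_space
  by (simp add: compatible_iff_tuple_map tuple_map_inputs)

lemma quasifunctional_glue: "quasifunctional LL inputs outputs (g \<circ> f)"
  unfolding quasifunctional_def
proof (intro conjI ballI)
  show "set inputs \<subseteq> verts LL" "set outputs \<subseteq> verts LL"
    using ws_verts vs'_verts by (auto simp: glue_simps intro!: class_of_in_classes)
  fix \<Phi> assume "\<Phi> \<in> config_space LL"
  then show "tuple_map outputs \<Phi> = (g \<circ> f) (tuple_map inputs \<Phi>)"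
    using output_eq' parts_in_config_space right_part_inputs by (simp add: tuple_map_outputs)
qed

lemma glued_config_props:
  assumes \<phi>: "\<phi> \<in> config_space L" and \<psi>: "\<psi> \<in> config_space L'"
    and matching: "tuple_map ws' \<psi> = f (tuple_map ws \<phi>)"
  shows "glued_config \<phi> \<psi> \<in> config_space LL" "left_part (glued_config \<phi> \<psi>) = \<phi>"
    "right_part (glued_config \<phi> \<psi>) = \<psi>" "tuple_map inputs (glued_config \<phi> \<psi>) = tuple_map ws \<phi>"
proof -
  have c: "compatible \<phi> \<psi>" unfolding compatible_iff_tuple_map using output_eq[OF \<phi>] matching by simp
  show "glued_config \<phi> \<psi> \<in> config_space LL" by (rule glued_config_in_config_space[OF \<phi> \<psi> c])
  show left: "left_part (glued_config \<phi> \<psi>) = \<phi>" by (rule left_part_glued_config[OF \<phi> c])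
  show "right_part (glued_config \<phi> \<psi>) = \<psi>" by (rule right_part_glued_config[OF \<psi> c])
  show "tuple_map inputs (glued_config \<phi> \<psi>) = tuple_map ws \<phi>" by (simp add: tuple_map_inputs left)
qed

lemma composed_domain_inputs: "U \<inter> f -` U' \<subseteq> tuple_map inputs ` config_space LL"
proof
  fix u assume u: "u \<in> U \<inter> f -` U'"
  obtain \<phi> where \<phi>: "\<phi> \<in> config_space L" "tuple_map ws \<phi> = u" using U_inputs u by auto
  obtain \<psi> where \<psi>: "\<psi> \<in> config_space L'" "tuple_map ws' \<psi> = f u" using U'_inputs u by auto
  show "u \<in> tuple_map inputs ` config_space LL"
    using glued_config_props[OF \<phi>(1) \<psi>(1)] \<phi>(2) \<psi>(2)
    by (intro image_eqI[of _ _ "glued_config \<phi> \<psi>"]) auto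
qed

lemma analytic_restriction_inputs:
  assumes "A \<subseteq> config_space LL"
  shows "analytic_restriction (verts LL) {..<length inputs} (tuple_map inputs) A"
proof -
  have "set inputs \<subseteq> classes" using ws_verts by (auto intro!: class_of_in_classes)
  moreover have "A \<subseteq> coord_space classes"
    using assms by (auto simp: config_space_def coord_space_def glue_simps)
  ultimately show ?thesis
    unfolding glue_simps by (rule analytic_restriction_tuple_map[OF finite_classes])
qed

end

lemma continuous_on_nat_pair_fun:
  fixes h1 h2 :: "'x::topological_space \<Rightarrow> nat"
  assumes "continuous_on S h1" "continuous_on S h2"
  shows "continuous_on S (\<lambda>x. F (h1 x) (h2 x) :: 'b::topological_space)"
proof -
  have "open A" for A :: "(nat \<times> nat) set"
  proof -
    have "A = (\<Union>p\<in>A. {fst p} \<times> {snd p})" by auto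
    also have "open \<dots>" by (intro open_UN ballI open_Times open_discrete)
    finally show ?thesis .
  qed
  then have "continuous_on UNIV (\<lambda>p::nat \<times> nat. F (fst p) (snd p))"
    unfolding continuous_on_open_invariant by blast
  from continuous_on_compose2[OF this continuous_on_Pair[OF assms]] show ?thesis by simp
qed

locale parametrised_composition = linkage_composition L L' vs ws' ws vs' f g U U'
  for L :: "('v, 'e, 'a::euclidean_space) linkage" and L' :: "('w, 'f, 'a) linkage"
    and vs ws' ws vs' f g U U' +
  fixes E E' :: "nat set"
    and \<sigma> :: "(nat \<Rightarrow> 'a) \<Rightarrow> nat \<Rightarrow> 'v \<Rightarrow> 'a" and \<sigma>' :: "('v \<Rightarrow> 'a) \<Rightarrow> (nat \<Rightarrow> 'a) \<times> nat"
    and \<tau> :: "(nat \<Rightarrow> 'a) \<Rightarrow> nat \<Rightarrow> 'w \<Rightarrow> 'a" and \<tau>' :: "('w \<Rightarrow> 'a) \<Rightarrow> (nat \<Rightarrow> 'a) \<times> nat"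
  assumes \<sigma>_hom: "homeomorphism (U \<times> E) {\<phi> \<in> config_space L. tuple_map ws \<phi> \<in> U} (\<lambda>(u, c). \<sigma> u c) \<sigma>'"
    and \<tau>_hom: "homeomorphism (U' \<times> E') {\<psi> \<in> config_space L'. tuple_map ws' \<psi> \<in> U'} (\<lambda>(u, c). \<tau> u c) \<tau>'"
    and \<sigma>_inputs: "\<And>u c. u \<in> U \<Longrightarrow> c \<in> E \<Longrightarrow> tuple_map ws (\<sigma> u c) = u"
    and \<tau>_inputs: "\<And>u c. u \<in> U' \<Longrightarrow> c \<in> E' \<Longrightarrow> tuple_map ws' (\<tau> u c) = u"
    and f_continuous: "continuous_on U f"
begin

abbreviation "composed_domain \<equiv> U \<inter> f -` U'"
abbreviation "composed_configs \<equiv> {\<Phi> \<in> config_space LL. tuple_map inputs \<Phi> \<in> composed_domain}"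

text \<open>Labels are natural numbers, so a pair of labels of L and L' is encoded by prod_encode.\<close>
abbreviation "labels \<equiv> prod_encode ` (E \<times> E')"

definition glued_param :: "(nat \<Rightarrow> 'a) \<Rightarrow> nat \<Rightarrow> ('v + 'w) set \<Rightarrow> 'a" where
  "glued_param u c = glued_config (\<sigma> u (fst (prod_decode c))) (\<tau> (f u) (snd (prod_decode c)))"

definition glued_param_inv :: "(('v + 'w) set \<Rightarrow> 'a) \<Rightarrow> (nat \<Rightarrow> 'a) \<times> nat" where
  "glued_param_inv \<Phi> =
     (tuple_map inputs \<Phi>, prod_encode (snd (\<sigma>' (left_part \<Phi>)), snd (\<tau>' (right_part \<Phi>))))"

lemma \<sigma>_left_inverse: "u \<in> U \<Longrightarrow> c \<in> E \<Longrightarrow> \<sigma> u c \<in> config_space L \<and> \<sigma>' (\<sigma> u c) = (u, c)"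
  using homeomorphism_parametrisation(1)[OF \<sigma>_hom] by blast

lemma \<tau>_left_inverse: "u \<in> U' \<Longrightarrow> c \<in> E' \<Longrightarrow> \<tau> u c \<in> config_space L' \<and> \<tau>' (\<tau> u c) = (u, c)"
  using homeomorphism_parametrisation(1)[OF \<tau>_hom] by blast

lemma \<sigma>_right_inverse:
  assumes "\<phi> \<in> config_space L" "tuple_map ws \<phi> \<in> U"
  shows "snd (\<sigma>' \<phi>) \<in> E \<and> \<sigma> (tuple_map ws \<phi>) (snd (\<sigma>' \<phi>)) = \<phi>"
proof -
  have "\<sigma>' \<phi> \<in> U \<times> E" "\<sigma> (fst (\<sigma>' \<phi>)) (snd (\<sigma>' \<phi>)) = \<phi>"
    using homeomorphism_parametrisation(2)[OF \<sigma>_hom] assms by auto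
  moreover from this have "fst (\<sigma>' \<phi>) = tuple_map ws \<phi>" using \<sigma>_inputs by (metis mem_Times_iff)
  ultimately show ?thesis by auto
qed

lemma \<tau>_right_inverse:
  assumes "\<psi> \<in> config_space L'" "tuple_map ws' \<psi> \<in> U'"
  shows "snd (\<tau>' \<psi>) \<in> E' \<and> \<tau> (tuple_map ws' \<psi>) (snd (\<tau>' \<psi>)) = \<psi>"
proof -
  have "\<tau>' \<psi> \<in> U' \<times> E'" "\<tau> (fst (\<tau>' \<psi>)) (snd (\<tau>' \<psi>)) = \<psi>"
    using homeomorphism_parametrisation(2)[OF \<tau>_hom] assms by auto
  moreover from this have "fst (\<tau>' \<psi>) = tuple_map ws' \<psi>" using \<tau>_inputs by (metis mem_Times_iff)
  ultimately show ?thesis by auto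
qed

lemma f_eq_outputs: "u \<in> U \<Longrightarrow> c \<in> E \<Longrightarrow> f u = tuple_map vs (\<sigma> u c)"
  using output_eq \<sigma>_left_inverse \<sigma>_inputs by simp

lemma glued_param_inverse:
  assumes u: "u \<in> composed_domain" and c: "c \<in> labels"
  shows "glued_param u c \<in> composed_configs \<and> glued_param_inv (glued_param u c) = (u, c)"
proof -
  obtain a b where ab: "c = prod_encode (a, b)" "a \<in> E" "b \<in> E'" using c by auto
  have uU: "u \<in> U" and fu: "f u \<in> U'" using u by auto
  note \<sigma> = \<sigma>_left_inverse[OF uU ab(2)] and \<tau> = \<tau>_left_inverse[OF fu ab(3)]
  have "tuple_map ws' (\<tau> (f u) b) = f (tuple_map ws (\<sigma> u a))"
    using \<sigma>_inputs[OF uU ab(2)] \<tau>_inputs[OF fu ab(3)] by simp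
  note glued = glued_config_props[OF conjunct1[OF \<sigma>] conjunct1[OF \<tau>] this]
  have "glued_param u c = glued_config (\<sigma> u a) (\<tau> (f u) b)" by (simp add: glued_param_def ab)
  with glued u ab \<sigma> \<tau> \<sigma>_inputs[OF uU ab(2)] show ?thesis
    by (simp add: glued_param_inv_def)
qed

lemma glued_param_inv_inverse:
  assumes \<Phi>: "\<Phi> \<in> composed_configs"
  shows "glued_param_inv \<Phi> \<in> composed_domain \<times> labels \<and>
         glued_param (fst (glued_param_inv \<Phi>)) (snd (glued_param_inv \<Phi>)) = \<Phi>"
proof -
  have \<Phi>C: "\<Phi> \<in> config_space LL" and u: "tuple_map inputs \<Phi> \<in> composed_domain" using \<Phi> by auto
  note parts = parts_in_config_space[OF \<Phi>C]
  have left: "snd (\<sigma>' (left_part \<Phi>)) \<in> E \<and> \<sigma> (tuple_map inputs \<Phi>) (snd (\<sigma>' (left_part \<Phi>))) = left_part \<Phi>"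
    using \<sigma>_right_inverse[of "left_part \<Phi>"] parts u by (simp add: tuple_map_inputs)
  have right: "snd (\<tau>' (right_part \<Phi>)) \<in> E' \<and>
      \<tau> (f (tuple_map inputs \<Phi>)) (snd (\<tau>' (right_part \<Phi>))) = right_part \<Phi>"
    using \<tau>_right_inverse[of "right_part \<Phi>"] parts u right_part_inputs[OF \<Phi>C] by simp
  show ?thesis
    using u left right glued_config_parts[OF \<Phi>C] by (simp add: glued_param_inv_def glued_param_def)
qed

lemma continuous_on_glued_param:
  "continuous_on (composed_domain \<times> labels) (\<lambda>(u, c). glued_param u c)"
proof -
  have decode: "prod_decode c \<in> E \<times> E'" if "c \<in> labels" for c using that by auto
  have label_cont: "continuous_on (composed_domain \<times> labels) (\<lambda>x. h (prod_decode (snd x)))"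
    for h :: "_ \<Rightarrow> nat"
    by (rule continuous_on_compose2[OF Topological_Spaces.continuous_on_discrete[of UNIV]
          continuous_on_snd[OF continuous_on_id]]) auto
  have left_cont: "continuous_on (composed_domain \<times> labels) (\<lambda>x. (fst x, fst (prod_decode (snd x))))"
    by (intro continuous_on_Pair continuous_on_fst continuous_on_id label_cont)
  have left_into: "(\<lambda>x. (fst x, fst (prod_decode (snd x)))) ` (composed_domain \<times> labels) \<subseteq> U \<times> E"
    using decode by force
  have "continuous_on (composed_domain \<times> labels) (\<lambda>x. \<sigma> (fst x) (fst (prod_decode (snd x))))"
    using continuous_on_compose2[OF homeomorphism_cont1[OF \<sigma>_hom] left_cont left_into]
    by (simp add: case_prod_unfold)
  moreover have "continuous_on (composed_domain \<times> labels) (\<lambda>x. f (fst x))"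
    by (rule continuous_on_compose2[OF f_continuous continuous_on_fst[OF continuous_on_id]]) auto
  then have right_cont:
    "continuous_on (composed_domain \<times> labels) (\<lambda>x. (f (fst x), snd (prod_decode (snd x))))"
    by (intro continuous_on_Pair label_cont)
  have right_into: "(\<lambda>x. (f (fst x), snd (prod_decode (snd x)))) ` (composed_domain \<times> labels) \<subseteq> U' \<times> E'"
    using decode by force
  have "continuous_on (composed_domain \<times> labels) (\<lambda>x. \<tau> (f (fst x)) (snd (prod_decode (snd x))))"
    using continuous_on_compose2[OF homeomorphism_cont1[OF \<tau>_hom] right_cont right_into]
    by (simp add: case_prod_unfold)
  ultimately show ?thesis
    unfolding glued_param_def case_prod_unfold by (rule continuous_on_glued_config)
qed

lemma continuous_on_glued_param_inv: "continuous_on composed_configs glued_param_inv"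
proof -
  have "left_part ` composed_configs \<subseteq> {\<phi> \<in> config_space L. tuple_map ws \<phi> \<in> U}"
    using parts_in_config_space by (auto simp: tuple_map_inputs)
  then have left: "continuous_on composed_configs (\<lambda>\<Phi>. snd (\<sigma>' (left_part \<Phi>)))"
    by (intro continuous_on_snd
        continuous_on_compose2[OF homeomorphism_cont2[OF \<sigma>_hom] continuous_on_left_part])
  have "right_part ` composed_configs \<subseteq> {\<psi> \<in> config_space L'. tuple_map ws' \<psi> \<in> U'}"
    using parts_in_config_space right_part_inputs by auto
  then have right: "continuous_on composed_configs (\<lambda>\<Phi>. snd (\<tau>' (right_part \<Phi>)))"
    by (intro continuous_on_snd
        continuous_on_compose2[OF homeomorphism_cont2[OF \<tau>_hom] continuous_on_right_part])
  from continuous_on_nat_pair_fun[OF left right, of "\<lambda>a b. prod_encode (a, b)"]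
  show ?thesis unfolding glued_param_inv_def by (intro continuous_on_Pair continuous_on_tuple_map)
qed

lemma homeomorphism_glued_param:
  "homeomorphism (composed_domain \<times> labels) composed_configs (\<lambda>(u, c). glued_param u c) glued_param_inv"
proof (rule homeomorphismI[OF continuous_on_glued_param continuous_on_glued_param_inv])
  show "(\<lambda>(u, c). glued_param u c) ` (composed_domain \<times> labels) \<subseteq> composed_configs"
    using glued_param_inverse by auto
  show "glued_param_inv ` composed_configs \<subseteq> composed_domain \<times> labels"
    using glued_param_inv_inverse by blast
  show "glued_param_inv ((\<lambda>(u, c). glued_param u c) x) = x" if "x \<in> composed_domain \<times> labels" for x
    using glued_param_inverse that by auto
  show "(\<lambda>(u, c). glued_param u c) (glued_param_inv \<Phi>) = \<Phi>" if "\<Phi> \<in> composed_configs" for \<Phi>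
    using glued_param_inv_inverse[OF that] by (simp add: case_prod_unfold)
qed

lemma analytic_restriction_glued_param:
  assumes \<sigma>_analytic: "\<And>c. c \<in> E \<Longrightarrow> analytic_restriction {..<length ws} (verts L) (\<lambda>u. \<sigma> u c) U"
    and \<tau>_analytic: "\<And>c. c \<in> E' \<Longrightarrow> analytic_restriction {..<length ws'} (verts L') (\<lambda>u. \<tau> u c) U'"
    and c: "c \<in> labels"
  shows "analytic_restriction {..<length inputs} (verts LL) (\<lambda>u. glued_param u c) composed_domain"
proof -
  obtain a b where ab: "c = prod_encode (a, b)" "a \<in> E" "b \<in> E'" using c by auto
  have "analytic_restriction {..<length ws} classes
          (\<lambda>u. glued_config (\<sigma> u a) (\<tau> (tuple_map vs (\<sigma> u a)) b)) composed_domain"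
    by (rule analytic_restriction_glued_config[OF _ \<sigma>_analytic[OF ab(2)] \<tau>_analytic[OF ab(3)]])
       (use ab f_eq_outputs in auto)
  then show ?thesis
    unfolding glue_simps length_map
    by (rule analytic_restriction_cong) (use ab f_eq_outputs in \<open>auto simp: glued_param_def\<close>)
qed

lemma analytic_restriction_glued_param_inv:
  "analytic_restriction (verts LL) {..<length inputs} (fst \<circ> glued_param_inv) composed_configs"
  by (rule analytic_restriction_cong[OF analytic_restriction_inputs]) (auto simp: glued_param_inv_def)

lemma functional_on_glued_param:
  assumes "finite E" "finite E'"
    and "\<And>c. c \<in> E \<Longrightarrow> analytic_restriction {..<length ws} (verts L) (\<lambda>u. \<sigma> u c) U"
    and "\<And>c. c \<in> E' \<Longrightarrow> analytic_restriction {..<length ws'} (verts L') (\<lambda>u. \<tau> u c) U'"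
  shows "functional_on LL inputs outputs (g \<circ> f) composed_domain"
  unfolding functional_on_def
proof (intro conjI quasifunctional_glue composed_domain_inputs exI)
  show "finite labels" using assms(1,2) by simp
  show "homeomorphism (composed_domain \<times> labels) composed_configs
          (\<lambda>(u, c). glued_param u c) glued_param_inv"
    by (rule homeomorphism_glued_param)
  show "\<forall>u\<in>composed_domain. \<forall>c\<in>labels. tuple_map inputs (glued_param u c) = u"
    using glued_param_inverse by (simp add: glued_param_inv_def)
  show "\<forall>c\<in>labels.
          analytic_restriction {..<length inputs} (verts LL) (\<lambda>u. glued_param u c) composed_domain"
    using analytic_restriction_glued_param[OF assms(3,4)] by blast
  show "analytic_restriction (verts LL) {..<length inputs} (fst \<circ> glued_param_inv) composed_configs"
    by (rule analytic_restriction_glued_param_inv)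
qed

end

context linkage_composition
begin

lemma functional_on_glue:
  assumes "functional_on L ws vs f U" and "functional_on L' ws' vs' g U'"
  shows "functional_on LL inputs outputs (g \<circ> f) (U \<inter> f -` U')"
proof -
  obtain E :: "nat set" and \<sigma> :: "_ \<Rightarrow> nat \<Rightarrow> _" and \<sigma>' where "finite E"
    and "homeomorphism (U \<times> E) {\<phi> \<in> config_space L. tuple_map ws \<phi> \<in> U} (\<lambda>(u, c). \<sigma> u c) \<sigma>'"
    and "\<forall>u\<in>U. \<forall>c\<in>E. tuple_map ws (\<sigma> u c) = u"
    and "\<forall>c\<in>E. analytic_restriction {..<length ws} (verts L) (\<lambda>u. \<sigma> u c) U"
    using assms(1) unfolding functional_on_def by blast
  moreover obtain E' :: "nat set" and \<tau> :: "_ \<Rightarrow> nat \<Rightarrow> _" and \<tau>' where "finite E'"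
    and "homeomorphism (U' \<times> E') {\<psi> \<in> config_space L'. tuple_map ws' \<psi> \<in> U'} (\<lambda>(u, c). \<tau> u c) \<tau>'"
    and "\<forall>u\<in>U'. \<forall>c\<in>E'. tuple_map ws' (\<tau> u c) = u"
    and "\<forall>c\<in>E'. analytic_restriction {..<length ws'} (verts L') (\<lambda>u. \<tau> u c) U'"
    using assms(2) unfolding functional_on_def by blast
  moreover have "continuous_on U f" by (rule functional_on_continuous_on[OF assms(1)])
  ultimately interpret parametrised_composition L L' vs ws' ws vs' f g U U' E E' \<sigma> \<sigma>' \<tau> \<tau>'
    by unfold_locales auto
  show ?thesis
    by (rule functional_on_glued_param)
       (use \<open>finite E\<close> \<open>finite E'\<close> \<open>\<forall>c\<in>E. _\<close> \<open>\<forall>c\<in>E'. _\<close> in auto)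
qed

lemma inputs_map_inverse:
  assumes q: "homeomorphism (config_space L) (tuple_map ws ` config_space L) (tuple_map ws) qi"
    and q': "homeomorphism (config_space L') (tuple_map ws' ` config_space L') (tuple_map ws') qi'"
    and \<Phi>: "\<Phi> \<in> config_space LL"
  defines "u \<equiv> tuple_map inputs \<Phi>"
  shows "u \<in> tuple_map ws ` config_space L" and "f u = tuple_map vs (qi u)"
    and "f u \<in> tuple_map ws' ` config_space L'" and "glued_config (qi u) (qi' (f u)) = \<Phi>"
proof -
  note parts = parts_in_config_space[OF \<Phi>]
  have u: "u = tuple_map ws (left_part \<Phi>)" by (simp add: u_def tuple_map_inputs)
  have fu: "f u = tuple_map ws' (right_part \<Phi>)" by (simp add: u_def right_part_inputs[OF \<Phi>])
  have left: "qi u = left_part \<Phi>"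
    unfolding u by (rule homeomorphism_apply1[OF q]) (use parts in blast)
  have right: "qi' (f u) = right_part \<Phi>"
    unfolding fu by (rule homeomorphism_apply1[OF q']) (use parts in blast)
  show "u \<in> tuple_map ws ` config_space L" unfolding u using parts by blast
  show "f u \<in> tuple_map ws' ` config_space L'" unfolding fu using parts by blast
  show "f u = tuple_map vs (qi u)"
    using output_eq[of "left_part \<Phi>"] parts left u by simp
  show "glued_config (qi u) (qi' (f u)) = \<Phi>" using left right glued_config_parts[OF \<Phi>] by simp
qed

lemma strongly_functional_on_glue:
  assumes "strongly_functional_on L ws vs f U" and "strongly_functional_on L' ws' vs' g U'"
  shows "strongly_functional_on LL inputs outputs (g \<circ> f) (U \<inter> f -` U')"
proof -
  let ?C = "config_space LL" and ?I = "tuple_map inputs ` config_space LL"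
  obtain qi where q: "homeomorphism (config_space L) (tuple_map ws ` config_space L) (tuple_map ws) qi"
    and qi: "analytic_restriction {..<length ws} (verts L) qi (tuple_map ws ` config_space L)"
    using assms(1) unfolding strongly_functional_on_def analytic_iso_def by blast
  obtain qi' where
    q': "homeomorphism (config_space L') (tuple_map ws' ` config_space L') (tuple_map ws') qi'"
    and qi': "analytic_restriction {..<length ws'} (verts L') qi' (tuple_map ws' ` config_space L')"
    using assms(2) unfolding strongly_functional_on_def analytic_iso_def by blast
  define q_inv where "q_inv u = glued_config (qi u) (qi' (f u))" for u
  note inverse = inputs_map_inverse[OF q q']
  have I: "u \<in> tuple_map ws ` config_space L" "f u = tuple_map vs (qi u)"
    "f u \<in> tuple_map ws' ` config_space L'" "q_inv u \<in> ?C" "tuple_map inputs (q_inv u) = u"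
    if "u \<in> ?I" for u
    using that inverse by (auto simp: q_inv_def)
  have "homeomorphism ?C ?I (tuple_map inputs) q_inv"
  proof (rule homeomorphismI)
    have "continuous_on ?I qi"
      by (rule continuous_on_subset[OF homeomorphism_cont2[OF q]]) (use I(1) in blast)
    moreover have "continuous_on ?I (\<lambda>u. qi' (f u))"
    proof (rule continuous_on_eq)
      have "continuous_on ?I (\<lambda>u. tuple_map vs (qi u))"
        by (rule continuous_on_compose2[OF continuous_on_tuple_map \<open>continuous_on ?I qi\<close>]) auto
      moreover have "(\<lambda>u. tuple_map vs (qi u)) ` ?I \<subseteq> tuple_map ws' ` config_space L'"
        using I(2,3) by auto
      ultimately show "continuous_on ?I (\<lambda>u. qi' (tuple_map vs (qi u)))"
        by (rule continuous_on_compose2[OF homeomorphism_cont2[OF q']])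
    qed (use I(2) in simp)
    ultimately show "continuous_on ?I q_inv"
      unfolding q_inv_def by (rule continuous_on_glued_config)
  qed (use I(4,5) inverse(4) in \<open>auto simp: q_inv_def continuous_on_tuple_map\<close>)
  moreover have "analytic_restriction (verts LL) {..<length inputs} (tuple_map inputs) ?C"
    by (rule analytic_restriction_inputs) simp
  moreover have "analytic_restriction {..<length inputs} (verts LL) q_inv ?I"
  proof -
    have "analytic_restriction {..<length ws} classes
            (\<lambda>u. glued_config (qi u) (qi' (tuple_map vs (qi u)))) ?I"
      by (rule analytic_restriction_glued_config[OF _ qi qi']) (use I(1-3) in auto)
    then show ?thesis
      unfolding glue_simps length_map by (rule analytic_restriction_cong) (simp add: q_inv_def I(2))
  qed
  ultimately show ?thesis
    unfolding strongly_functional_on_def analytic_iso_def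
    by (intro conjI quasifunctional_glue composed_domain_inputs exI[of _ q_inv])
qed

end

lemma linkage_compositionI:
  assumes "cabled_linkage L" "cabled_linkage L'" "length ws' = length vs"
    and "quasifunctional L ws vs f" "quasifunctional L' ws' vs' g"
    and "U \<subseteq> tuple_map ws ` config_space L" "U' \<subseteq> tuple_map ws' ` config_space L'"
    and "U \<inter> f -` U' \<noteq> {}"
  shows "linkage_composition L L' vs ws' ws vs' f g U U'"
  using assms by unfold_locales (auto simp: quasifunctional_def)

theorem lemma4p1:
  fixes L :: "('v, 'e, 'a::euclidean_space) linkage" and L' :: "('w, 'f, 'a) linkage"
    and ws vs :: "'v list" and ws' vs' :: "'w list"
    and f g :: "(nat \<Rightarrow> 'a) \<Rightarrow> (nat \<Rightarrow> 'a)"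
    and U U' :: "(nat \<Rightarrow> 'a) set" and k m l :: nat
  assumes "cabled_linkage L" and "cabled_linkage L'"
    and "length ws = k" and "length vs = m" and "length ws' = m" and "length vs' = l"
    and "U \<inter> f -` U' \<noteq> {}"
  shows "(functional_on L ws vs f U \<and> functional_on L' ws' vs' g U' \<longrightarrow>
            functional_on (glue L L' vs ws') (glue_inputs L L' vs ws' ws)
              (glue_outputs L L' vs ws' vs') (g \<circ> f) (U \<inter> f -` U')) \<and>
         (strongly_functional_on L ws vs f U \<and> strongly_functional_on L' ws' vs' g U' \<longrightarrow>
            strongly_functional_on (glue L L' vs ws') (glue_inputs L L' vs ws' ws)
              (glue_outputs L L' vs ws' vs') (g \<circ> f) (U \<inter> f -` U'))"
proof (intro conjI impI; elim conjE)
  assume hyps: "functional_on L ws vs f U" "functional_on L' ws' vs' g U'"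
  then interpret linkage_composition L L' vs ws' ws vs' f g U U'
    using assms by (intro linkage_compositionI) (auto simp: functional_on_def)
  show "functional_on (glue L L' vs ws') (glue_inputs L L' vs ws' ws)
      (glue_outputs L L' vs ws' vs') (g \<circ> f) (U \<inter> f -` U')"
    unfolding glue_inputs_eq glue_outputs_eq by (rule functional_on_glue[OF hyps])
next
  assume hyps: "strongly_functional_on L ws vs f U" "strongly_functional_on L' ws' vs' g U'"
  then interpret linkage_composition L L' vs ws' ws vs' f g U U'
    using assms by (intro linkage_compositionI) (auto simp: strongly_functional_on_def)
  show "strongly_functional_on (glue L L' vs ws') (glue_inputs L L' vs ws' ws)
      (glue_outputs L L' vs ws' vs') (g \<circ> f) (U \<inter> f -` U')"
    unfolding glue_inputs_eq glue_outputs_eq by (rule strongly_functional_on_glue[OF hyps])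
qed

end
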